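(* Suppose Assumption 1 (multi-group version) holds, $\mathcal{G}_s\neq\emptyset$, $G$ is independent of $T$, and $P(G^*=1)>0$, $P(G^*=-1)>0$; assume all conditional expectations below are well defined and finite. Then: 1. If Assumptions 3 and 4 (multi-group versions) hold, $w_{10}W^*_{DID}(1,0)+(1-w_{10})W^*_{DID}(-1,0)=\Delta^*$. 2. If Assumption 3' (multi-group version) holds, $w_{10}W^*_{TC}(1)+(1-w_{10})W^*_{TC}(-1)=\Delta^*$. 3. If Assumptions 6 and 7 (multi-group versions) hold, $w_{10}W^*_{CIC}(1)+(1-w_{10})W^*_{CIC}(-1)=\Delta^*$.
   Context: Multi-group framework. Let $(Y(0),Y(1),V,G,T)$ be random variables with $G\in\{0,1,\dots,\bar g\}$, $T\in\{0,1\}$, $V$ real, and real constants $(v_{gt})$. Treatment $D=1\{V\geq v_{GT}\}$, potential treatments $D(t)=1\{V\geq v_{Gt}\}$, observed outcome $Y=DY(1)+(1-D)Y(0)$. For a random variable $R$, $R_{gt}$ is distributed as $R$ given $G=g,T=t$, $R_{dgt}$ as $R$ given $D=d,G=g,T=t$; $F_R$ denotes cdfs and $F^{-1}(q)=\inf\{x:F(x)\ge q\}$. Assumption 1: $D=1\{V\geq v_{GT}\}$, $V$ independent of $T$ given $G$. Assumption 3: $E(Y(0)\mid G,T=1)-E(Y(0)\mid G,T=0)$ does not depend on $G$. Assumption 4: $E(Y(1)-Y(0)\mid G,T=1,D(0)=1)=E(Y(1)-Y(0)\mid G,T=0,D(0)=1)$. Assumption 3': for $d\in\{0,1\}$, $E(Y(d)\mid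 G,T=1,D(0)=d)-E(Y(d)\mid G,T=0,D(0)=d)$ does not depend on $G$. Assumption 6: for $d\in\{0,1\}$, $Y(d)=h_d(U_d,T)$, $U_d$ real, $h_d(\cdot,t)$ strictly increasing for each $t$, and $U_d$ independent of $T$ given $(G,D(0))$. Assumption 7: $\mathrm{Supp}(Y_{dgt})=\mathrm{Supp}(Y)$ for all $(d,g,t)$ in the support of $(D,G,T)$, $\mathrm{Supp}(Y)$ a closed interval, and each $F_{Y_{dgt}}$ continuous on $\mathbb{R}$ and strictly increasing on $\mathrm{Supp}(Y)$. Define $S_g=\{D(0)\neq D(1),G=g\}$, $S^*=\bigcup_{g=0}^{\bar g}S_g$, $\Delta^*=E(Y(1)-Y(0)\mid S^*,T=1)$; $\mathcal{G}_s=\{g:E(D_{g1})=E(D_{g0})\}$, $\mathcal{G}_i=\{g:E(D_{g1})>E(D_{g0})\}$, $\mathcal{G}_d=\{g:E(D_{g1})<E(D_{g0})\}$; $G^*=1\{G\in\mathcal{G}_i\}-1\{G\in\mathcal{G}_d\}$. For a random variable $R$, $g\ne g'\in\{-1,0,1\}$, $d\in\{0,1\}$: $DID^*_R(g,g')=E(R\mid G^*=g,T=1)-E(R\mid G^*=g,T=0)-\big(E(R\mid G^*=g',T=1)-E(R\mid G^*=g',T=0)\big)$; $\delta^*_d=E(Y\mid D=d,G^*=0,T=1)-E(Y\mid D=d,G^*=0,T=0)$; $Q^*_d=F^{-1}_{Y\mid D=d,G^*=0,T=1}\circ F_{Y\mid D=d,G^*=0,T=0}$; $W^*_{DID}(g,g')=DID^*_Y(g,g')/DID^*_D(g,g')$;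 $W^*_{TC}(g)=\dfrac{E(Y\mid G^*=g,T=1)-E(Y+\delta^*_D\mid G^*=g,T=0)}{E(D\mid G^*=g,T=1)-E(D\mid G^*=g,T=0)}$; $W^*_{CIC}(g)=\dfrac{E(Y\mid G^*=g,T=1)-E(Q^*_D(Y)\mid G^*=g,T=0)}{E(D\mid G^*=g,T=1)-E(D\mid G^*=g,T=0)}$; $w_{10}=\dfrac{DID^*_D(1,0)P(G^*=1)}{DID^*_D(1,0)P(G^*=1)+DID^*_D(0,-1)P(G^*=-1)}$. *)

theory Defs
  imports "HOL-Probability.Probability"
begin

text \<open>Events, conditional expectations, conditional cdfs, quantile inverses and supports
 given conditioning events (all conditioning events are discrete and are assumed to have
 positive probability where the paper needs them).\<close>

definition evt :: "'a measure \<Rightarrow> ('a \<Rightarrow> bool) \<Rightarrow> 'a set" where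
  "evt M P = {\<omega> \<in> space M. P \<omega>}"

definition cexp :: "'a measure \<Rightarrow> 'a set \<Rightarrow> ('a \<Rightarrow> real) \<Rightarrow> real" where
  "cexp M A X = integral\<^sup>L M (\<lambda>\<omega>. indicator A \<omega> * X \<omega>) / measure M A"

definition ccdf :: "'a measure \<Rightarrow> 'a set \<Rightarrow> ('a \<Rightarrow> real) \<Rightarrow> real \<Rightarrow> real" where
  "ccdf M A Y y = measure M {\<omega> \<in> A. Y \<omega> \<le> y} / measure M A"

definition qinv :: "(real \<Rightarrow> real) \<Rightarrow> real \<Rightarrow> real" where
  "qinv F q = Inf {x. q \<le> F x}"

definition csupp :: "'a measure \<Rightarrow> 'a set \<Rightarrow> ('a \<Rightarrow> real) \<Rightarrow> real set" where
  "csupp M A Y = {y. \<forall>e>0. 0 < measure M {\<omega> \<in> A. dist (Y \<omega>) y < e}}"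

definition treat :: "(nat \<Rightarrow> nat \<Rightarrow> real) \<Rightarrow> ('a \<Rightarrow> real) \<Rightarrow> ('a \<Rightarrow> nat) \<Rightarrow> nat \<Rightarrow> 'a \<Rightarrow> real" where
  "treat v V G t \<omega> = (if v (G \<omega>) t \<le> V \<omega> then 1 else 0)"

definition dobs :: "(nat \<Rightarrow> nat \<Rightarrow> real) \<Rightarrow> ('a \<Rightarrow> real) \<Rightarrow> ('a \<Rightarrow> nat) \<Rightarrow> ('a \<Rightarrow> nat) \<Rightarrow> 'a \<Rightarrow> real" where
  "dobs v V G T \<omega> = treat v V G (T \<omega>) \<omega>"

definition yobs :: "('a \<Rightarrow> real) \<Rightarrow> ('a \<Rightarrow> real) \<Rightarrow> ('a \<Rightarrow> real) \<Rightarrow> 'a \<Rightarrow> real" where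
  "yobs D Y0 Y1 \<omega> = D \<omega> * Y1 \<omega> + (1 - D \<omega>) * Y0 \<omega>"

definition EDgt :: "'a measure \<Rightarrow> ('a \<Rightarrow> real) \<Rightarrow> ('a \<Rightarrow> nat) \<Rightarrow> ('a \<Rightarrow> nat) \<Rightarrow> nat \<Rightarrow> nat \<Rightarrow> real" where
  "EDgt M D G T g t = cexp M (evt M (\<lambda>\<omega>. G \<omega> = g \<and> T \<omega> = t)) D"

definition gstar :: "'a measure \<Rightarrow> ('a \<Rightarrow> real) \<Rightarrow> ('a \<Rightarrow> nat) \<Rightarrow> ('a \<Rightarrow> nat) \<Rightarrow> 'a \<Rightarrow> int" where
  "gstar M D G T \<omega> =
     (if EDgt M D G T (G \<omega>) 1 > EDgt M D G T (G \<omega>) 0 then 1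
      else if EDgt M D G T (G \<omega>) 1 < EDgt M D G T (G \<omega>) 0 then -1 else 0)"

definition cexpGs :: "'a measure \<Rightarrow> ('a \<Rightarrow> int) \<Rightarrow> ('a \<Rightarrow> nat) \<Rightarrow> ('a \<Rightarrow> real) \<Rightarrow> int \<Rightarrow> nat \<Rightarrow> real" where
  "cexpGs M Gs T R g t = cexp M (evt M (\<lambda>\<omega>. Gs \<omega> = g \<and> T \<omega> = t)) R"

definition DIDs :: "'a measure \<Rightarrow> ('a \<Rightarrow> int) \<Rightarrow> ('a \<Rightarrow> nat) \<Rightarrow> ('a \<Rightarrow> real) \<Rightarrow> int \<Rightarrow> int \<Rightarrow> real" where
  "DIDs M Gs T R g g' =
     cexpGs M Gs T R g 1 - cexpGs M Gs T R g 0 - (cexpGs M Gs T R g' 1 - cexpGs M Gs T R g' 0)"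

definition cell0 :: "'a measure \<Rightarrow> ('a \<Rightarrow> real) \<Rightarrow> ('a \<Rightarrow> int) \<Rightarrow> ('a \<Rightarrow> nat) \<Rightarrow> real \<Rightarrow> nat \<Rightarrow> 'a set" where
  "cell0 M D Gs T d t = evt M (\<lambda>\<omega>. D \<omega> = d \<and> Gs \<omega> = 0 \<and> T \<omega> = t)"

definition deltas :: "'a measure \<Rightarrow> ('a \<Rightarrow> real) \<Rightarrow> ('a \<Rightarrow> int) \<Rightarrow> ('a \<Rightarrow> nat) \<Rightarrow> ('a \<Rightarrow> real) \<Rightarrow> real \<Rightarrow> real" where
  "deltas M D Gs T Y d = cexp M (cell0 M D Gs T d 1) Y - cexp M (cell0 M D Gs T d 0) Y"

definition Qs :: "'a measure \<Rightarrow> ('a \<Rightarrow> real) \<Rightarrow> ('a \<Rightarrow> int) \<Rightarrow> ('a \<Rightarrow> nat) \<Rightarrow> ('a \<Rightarrow> real) \<Rightarrow> real \<Rightarrow> real \<Rightarrow> real" where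
  "Qs M D Gs T Y d = qinv (ccdf M (cell0 M D Gs T d 1) Y) \<circ> ccdf M (cell0 M D Gs T d 0) Y"

definition W_DID :: "'a measure \<Rightarrow> ('a \<Rightarrow> real) \<Rightarrow> ('a \<Rightarrow> int) \<Rightarrow> ('a \<Rightarrow> nat) \<Rightarrow> ('a \<Rightarrow> real) \<Rightarrow> int \<Rightarrow> int \<Rightarrow> real" where
  "W_DID M D Gs T Y g g' = DIDs M Gs T Y g g' / DIDs M Gs T D g g'"

definition W_TC :: "'a measure \<Rightarrow> ('a \<Rightarrow> real) \<Rightarrow> ('a \<Rightarrow> int) \<Rightarrow> ('a \<Rightarrow> nat) \<Rightarrow> ('a \<Rightarrow> real) \<Rightarrow> int \<Rightarrow> real" where
  "W_TC M D Gs T Y g =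
     (cexpGs M Gs T Y g 1 - cexpGs M Gs T (\<lambda>\<omega>. Y \<omega> + deltas M D Gs T Y (D \<omega>)) g 0)
     / (cexpGs M Gs T D g 1 - cexpGs M Gs T D g 0)"

definition W_CIC :: "'a measure \<Rightarrow> ('a \<Rightarrow> real) \<Rightarrow> ('a \<Rightarrow> int) \<Rightarrow> ('a \<Rightarrow> nat) \<Rightarrow> ('a \<Rightarrow> real) \<Rightarrow> int \<Rightarrow> real" where
  "W_CIC M D Gs T Y g =
     (cexpGs M Gs T Y g 1 - cexpGs M Gs T (\<lambda>\<omega>. Qs M D Gs T Y (D \<omega>) (Y \<omega>)) g 0)
     / (cexpGs M Gs T D g 1 - cexpGs M Gs T D g 0)"

definition w10 :: "'a measure \<Rightarrow> ('a \<Rightarrow> real) \<Rightarrow> ('a \<Rightarrow> int) \<Rightarrow> ('a \<Rightarrow> nat) \<Rightarrow> real" where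
  "w10 M D Gs T =
     DIDs M Gs T D 1 0 * measure M (evt M (\<lambda>\<omega>. Gs \<omega> = 1))
     / (DIDs M Gs T D 1 0 * measure M (evt M (\<lambda>\<omega>. Gs \<omega> = 1))
        + DIDs M Gs T D 0 (-1) * measure M (evt M (\<lambda>\<omega>. Gs \<omega> = -1)))"

end

theory Submission
  imports Defs
begin

text \<open>
  Under Assumption 1 and the independence of G and T, the treatment rate of group g in period t
  is P(V \<ge> v_gt | G = g), so G* is the sign of the change of this rate and the thresholds
  v_g0, v_g1 are ordered accordingly: in groups with G* = 1 the switchers are the units with
  D(0) = 0 and D(1) = 1, in groups with G* = -1 those with D(0) = 1 and D(1) = 0, and in stable
  groups they have probability zero.  Splitting the period-1 outcome as the outcome under D(0)
  plus (D(1) - D(0))(Y(1) - Y(0)), each of the three estimators of the counterfactual evolution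
  (common trends of Y(0), group-independent trends of Y(d) given D(0) = d, or the quantile
  transform of the stable groups) turns the period-0 outcomes of a group into its expected
  period-1 outcome under D(0), up to a trend common to all groups that the Wald-DID removes
  through the stable groups.  Hence, for G* = \<plusminus>1, numerator and denominator of the Wald
  ratio are the switchers' effect and their share, both scaled by the same factor, and the
  weights w10 recombine the two ratios into the average effect over all switchers.
\<close>

(* Period indices stay numerals, so that facts about D(1) = treat v V G 1 keep matching after simp. *)
declare One_nat_def [simp del]

lemma weighted_ratio_eq:
  fixes a1 a2 b1 b2 :: real
  assumes "0 < b1" "0 < b2"
  shows "b1 / (b1 + b2) * (a1 / b1) + (1 - b1 / (b1 + b2)) * (a2 / b2) = (a1 + a2) / (b1 + b2)"
proof -
  have "1 - b1 / (b1 + b2) = b2 / (b1 + b2)"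
    using assms by (simp add: field_simps)
  then show ?thesis using assms by (simp add: add_divide_distrib)
qed

lemma strict_mono_on_bounded_extremes:
  fixes F :: "real \<Rightarrow> real"
  assumes "strict_mono_on S F" "\<And>x. 0 \<le> F x" "\<And>x. x \<in> S \<Longrightarrow> F x \<le> 1"
  obtains a0 a1 where "\<And>y. y \<in> S \<Longrightarrow> F y \<le> 0 \<or> 1 \<le> F y \<Longrightarrow> y = a0 \<or> y = a1"
proof
  fix y assume "y \<in> S" "F y \<le> 0 \<or> 1 \<le> F y"
  then have "F y = 0 \<or> F y = 1" using assms(2,3) by (meson order_antisym)
  moreover have "y = the_inv_into S F (F y)"
    using strict_mono_on_imp_inj_on[OF assms(1)] \<open>y \<in> S\<close> by (simp add: the_inv_into_f_f)
  ultimately show "y = the_inv_into S F 0 \<or> y = the_inv_into S F 1" by auto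
qed

section \<open>Set integrals and conditional distribution functions\<close>

lemma evt_in_sets [measurable]: "Measurable.pred M P \<Longrightarrow> evt M P \<in> sets M"
  unfolding evt_def by measurable

lemma set_integrable_of_integrable:
  fixes X :: "'a \<Rightarrow> real"
  shows "A \<in> sets M \<Longrightarrow> integrable M X \<Longrightarrow> set_integrable M A X"
  unfolding set_integrable_def by (rule integrable_mult_indicator)

lemma integrable_bounded_mult:
  fixes X Z :: "'a \<Rightarrow> real"
  assumes "integrable M X" "Z \<in> borel_measurable M" "\<And>\<omega>. \<bar>Z \<omega>\<bar> \<le> 1"
  shows "integrable M (\<lambda>\<omega>. Z \<omega> * X \<omega>)"
proof (rule Bochner_Integration.integrable_bound[OF assms(1)])
  show "AE \<omega> in M. norm (Z \<omega> * X \<omega>) \<le> norm (X \<omega>)"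
    using assms(3) by (intro AE_I2) (simp add: abs_mult mult_left_le_one_le)
qed (use assms in measurable)

lemma measurable_treat [measurable]:
  "V \<in> borel_measurable M \<Longrightarrow> G \<in> measurable M (count_space UNIV) \<Longrightarrow> treat v V G t \<in> borel_measurable M"
  unfolding treat_def by measurable

lemma measurable_dobs [measurable]:
  "V \<in> borel_measurable M \<Longrightarrow> G \<in> measurable M (count_space UNIV) \<Longrightarrow> T \<in> measurable M (count_space UNIV)
    \<Longrightarrow> dobs v V G T \<in> borel_measurable M"
  unfolding dobs_def treat_def by measurable

lemma measurable_yobs [measurable]:
  assumes [measurable]: "X \<in> borel_measurable M" "W0 \<in> borel_measurable M" "W1 \<in> borel_measurable M"
  shows "yobs X W0 W1 \<in> borel_measurable M"
  unfolding yobs_def by measurable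

lemma abs_treat_le_1: "\<bar>treat v V G t \<omega>\<bar> \<le> 1"
  by (simp add: treat_def)

lemma abs_dobs_le_1: "\<bar>dobs v V G T \<omega>\<bar> \<le> 1"
  by (simp add: dobs_def abs_treat_le_1)

lemma yobs_eq: "yobs X W0 W1 \<omega> = W0 \<omega> + X \<omega> * (W1 \<omega> - W0 \<omega>)"
  by (simp add: yobs_def algebra_simps)

lemma integrable_yobs:
  fixes W0 W1 :: "'a \<Rightarrow> real"
  assumes "integrable M W0" "integrable M W1" "X \<in> borel_measurable M" "\<And>\<omega>. \<bar>X \<omega>\<bar> \<le> 1"
  shows "integrable M (yobs X W0 W1)"
proof -
  have "integrable M (\<lambda>\<omega>. W0 \<omega> + X \<omega> * (W1 \<omega> - W0 \<omega>))"
    using assms integrable_bounded_mult[of M "\<lambda>\<omega>. W1 \<omega> - W0 \<omega>" X] by simp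
  then show ?thesis by (simp add: yobs_eq[abs_def])
qed

lemma yobs_01: "yobs X (\<lambda>_. 0) (\<lambda>_. 1) = X"
  by (simp add: yobs_def fun_eq_iff)

lemma ccdf_nonneg: "0 \<le> ccdf M A Y x"
  unfolding ccdf_def by simp

context prob_space
begin

lemma set_integral_eq_cexp:
  assumes "A \<in> sets M"
  shows "(LINT \<omega>:A|M. X \<omega>) = cexp M A X * prob A"
proof (cases "prob A = 0")
  case True
  then have "AE \<omega> in M. \<omega> \<notin> A"
    using assms by (simp add: AE_iff_null_sets[symmetric] null_sets_def emeasure_eq_measure)
  then have "(LINT \<omega>:A|M. X \<omega>) = 0"
    unfolding set_lebesgue_integral_def by (intro integral_eq_zero_AE) (auto elim: eventually_mono)
  then show ?thesis using True by simp
qed (simp add: cexp_def set_lebesgue_integral_def)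

lemma set_integral_const_prob: "A \<in> sets M \<Longrightarrow> (LINT \<omega>:A|M. c) = c * prob A"
  by (simp add: set_integral_const emeasure_eq_measure)

lemma set_integral_indicator_eq_prob:
  "A \<in> sets M \<Longrightarrow> B \<in> sets M \<Longrightarrow> (LINT \<omega>:A|M. indicator B \<omega>) = prob (A \<inter> B)"
  by (simp add: set_lebesgue_integral_def indicator_inter_arith[symmetric])

lemma sets_restrict_pred:
  assumes "A \<in> sets M" "Measurable.pred M P"
  shows "{\<omega> \<in> A. P \<omega>} \<in> sets M"
proof -
  have "{\<omega> \<in> A. P \<omega>} = A \<inter> {\<omega> \<in> space M. P \<omega>}"
    using sets.sets_into_space[OF assms(1)] by auto
  then show ?thesis using assms by auto
qed

lemma AE_witness:
  assumes "E \<in> sets M" "0 < prob E" "AE \<omega> in M. P \<omega>"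
  obtains \<omega> where "\<omega> \<in> E" "P \<omega>"
proof (rule ccontr)
  assume "\<not> thesis"
  with that have "\<forall>\<omega>\<in>E. \<not> P \<omega>" by blast
  with assms(3) have "AE \<omega> in M. \<omega> \<notin> E" by (auto elim: eventually_mono)
  then show False
    using assms(1,2) by (simp add: AE_iff_null_sets[symmetric] null_sets_def emeasure_eq_measure)
qed

lemma AE_in_csupp:
  assumes Y: "Y \<in> borel_measurable M" and A: "A \<in> sets M"
  shows "AE \<omega> in M. \<omega> \<in> A \<longrightarrow> Y \<omega> \<in> csupp M A Y"
proof -
  have "\<exists>e>0. prob {\<omega> \<in> A. dist (Y \<omega>) y < e} = 0" if "y \<notin> csupp M A Y" for y
  proof -
    from that obtain e where "e > 0" "\<not> 0 < prob {\<omega> \<in> A. dist (Y \<omega>) y < e}"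
      by (auto simp: csupp_def)
    then show ?thesis using measure_nonneg[of M "{\<omega> \<in> A. dist (Y \<omega>) y < e}"] by (intro exI[of _ e]) auto
  qed
  then obtain e where e: "\<And>y. y \<notin> csupp M A Y \<Longrightarrow> 0 < e y \<and> prob {\<omega> \<in> A. dist (Y \<omega>) y < e y} = 0"
    by metis
  \<comment> \<open>By Lindel\<ouml>f, countably many of these null balls cover the complement of the support.\<close>
  let ?F = "(\<lambda>y. ball y (e y)) ` (- csupp M A Y)"
  obtain F' where F': "F' \<subseteq> ?F" "countable F'" "\<Union>F' = \<Union>?F"
    by (rule Lindelof[of ?F]) auto
  let ?N = "\<lambda>B. {\<omega> \<in> space M. \<omega> \<in> A \<and> Y \<omega> \<in> B}"
  have "?N B \<in> null_sets M" if "B \<in> F'" for B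
  proof -
    obtain y where y: "y \<notin> csupp M A Y" "B = ball y (e y)" using F'(1) \<open>B \<in> F'\<close> by auto
    have "?N B = A \<inter> (Y -` B \<inter> space M)" using sets.sets_into_space[OF A] by auto
    then have "?N B \<in> sets M" using A y(2) measurable_sets[OF Y] by auto
    moreover have "?N B = {\<omega> \<in> A. dist (Y \<omega>) y < e y}"
      using sets.sets_into_space[OF A] y(2) by (auto simp: dist_commute)
    ultimately show ?thesis using e[OF y(1)] by (simp add: null_sets_def emeasure_eq_measure)
  qed
  then have "(\<Union>B\<in>F'. ?N B) \<in> null_sets M" using F'(2) by (intro null_sets_UN') auto
  moreover have "{\<omega> \<in> space M. \<not> (\<omega> \<in> A \<longrightarrow> Y \<omega> \<in> csupp M A Y)} \<subseteq> (\<Union>B\<in>F'. ?N B)"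
  proof
    fix \<omega> assume \<omega>: "\<omega> \<in> {\<omega> \<in> space M. \<not> (\<omega> \<in> A \<longrightarrow> Y \<omega> \<in> csupp M A Y)}"
    then have "Y \<omega> \<in> \<Union>?F" using e[of "Y \<omega>"] by force
    then obtain B where "B \<in> F'" "Y \<omega> \<in> B" using F'(3) by blast
    then show "\<omega> \<in> (\<Union>B\<in>F'. ?N B)" using \<omega> by blast
  qed
  ultimately show ?thesis by (rule AE_I')
qed

lemma set_integral_comp_if_law_proportional:
  assumes A0: "A0 \<in> sets M" and A1: "A1 \<in> sets M" and X: "X \<in> borel_measurable M" and c: "0 \<le> c"
    and law: "\<And>B. B \<in> sets borel \<Longrightarrow> prob (A1 \<inter> (X -` B \<inter> space M)) = c * prob (A0 \<inter> (X -` B \<inter> space M))"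
    and f: "f \<in> borel_measurable borel"
  shows "(LINT \<omega>:A1|M. f (X \<omega>)) = c * (LINT \<omega>:A0|M. f (X \<omega>))"
proof -
  let ?law = "\<lambda>A. distr (density M (indicator A)) borel X"
  have X': "X \<in> measurable (density M (indicator A)) borel" for A
    using X by (simp add: measurable_density_eq1)
  have integral_law: "(LINT \<omega>:A|M. f (X \<omega>)) = integral\<^sup>L (?law A) f" if "A \<in> sets M" for A
  proof -
    have "integral\<^sup>L (?law A) f = integral\<^sup>L (density M (\<lambda>\<omega>. ennreal (indicator A \<omega>))) (\<lambda>\<omega>. f (X \<omega>))"
      by (simp add: integral_distr[OF X' f] ennreal_indicator)
    also have "\<dots> = (LINT \<omega>:A|M. f (X \<omega>))"
      unfolding set_lebesgue_integral_def by (rule integral_density) (use X f that in auto)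
    finally show ?thesis ..
  qed
  have emeasure_law: "emeasure (?law A) B = emeasure M (A \<inter> (X -` B \<inter> space M))"
    if "A \<in> sets M" "B \<in> sets borel" for A B
    using that emeasure_distr[OF X' that(2)] emeasure_restricted[OF that(1) measurable_sets[OF X that(2)]]
    by simp
  have "?law A1 = density (?law A0) (\<lambda>_. ennreal c)"
  proof (rule measure_eqI)
    fix B assume "B \<in> sets (?law A1)"
    then have B: "B \<in> sets borel" by simp
    have "emeasure (?law A1) B = ennreal c * emeasure M (A0 \<inter> (X -` B \<inter> space M))"
      using law[OF B] A0 A1 c measurable_sets[OF X B]
      by (simp add: emeasure_law[OF A1 B] emeasure_eq_measure ennreal_mult)
    then show "emeasure (?law A1) B = emeasure (density (?law A0) (\<lambda>_. ennreal c)) B"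
      using B by (simp add: emeasure_density_const emeasure_law[OF A0 B])
  qed simp
  then have "(LINT \<omega>:A1|M. f (X \<omega>)) = (\<integral>x. c *\<^sub>R f x \<partial>?law A0)"
    using integral_density[of f _ "\<lambda>_. c"] f c by (simp add: integral_law[OF A1])
  then show ?thesis by (simp add: integral_law[OF A0])
qed

lemma ccdf_mono:
  assumes "x \<le> x'" "{\<omega> \<in> A. Y \<omega> \<le> x'} \<in> sets M"
  shows "ccdf M A Y x \<le> ccdf M A Y x'"
proof -
  have "prob {\<omega> \<in> A. Y \<omega> \<le> x} \<le> prob {\<omega> \<in> A. Y \<omega> \<le> x'}"
    using assms by (intro finite_measure_mono) auto
  then show ?thesis unfolding ccdf_def by (simp add: divide_right_mono)
qed

lemma ccdf_le_1:
  assumes "A \<in> sets M" "{\<omega> \<in> A. Y \<omega> \<le> x} \<in> sets M"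
  shows "ccdf M A Y x \<le> 1"
proof -
  have "prob {\<omega> \<in> A. Y \<omega> \<le> x} \<le> prob A" using assms by (intro finite_measure_mono) auto
  then show ?thesis unfolding ccdf_def
    by (cases "prob A = 0") (simp_all add: divide_le_eq_1 zero_less_measure_iff)
qed

lemma continuous_ccdf_imp_no_atom:
  assumes A: "A \<in> sets M" and Y: "Y \<in> borel_measurable M" and pos: "0 < prob A"
    and cont: "continuous_on UNIV (ccdf M A Y)"
  shows "prob {\<omega> \<in> A. Y \<omega> = a} = 0"
proof -
  have sets: "{\<omega> \<in> A. Y \<omega> \<in> B} \<in> sets M" if "B \<in> sets borel" for B
  proof -
    have "{\<omega> \<in> A. Y \<omega> \<in> B} = A \<inter> (Y -` B \<inter> space M)" using sets.sets_into_space[OF A] by auto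
    then show ?thesis using A measurable_sets[OF Y that] by auto
  qed
  have "prob {\<omega> \<in> A. Y \<omega> = a} \<le> \<epsilon>" if "0 < \<epsilon>" for \<epsilon>
  proof -
    obtain s where "0 < s" and s: "\<And>x. x \<noteq> a \<Longrightarrow> \<bar>x - a\<bar> < s \<Longrightarrow> \<bar>ccdf M A Y x - ccdf M A Y a\<bar> < \<epsilon> / prob A"
      using cont pos \<open>0 < \<epsilon>\<close> unfolding continuous_on_eq_continuous_at[OF open_UNIV] isCont_def LIM_eq
      by (metis UNIV_I divide_pos_pos real_norm_def)
    define x where "x = a - s / 2"
    have x: "x < a" "ccdf M A Y a - ccdf M A Y x < \<epsilon> / prob A"
      using s[of x] \<open>0 < s\<close> by (auto simp: x_def)
    have "prob {\<omega> \<in> A. Y \<omega> = a} \<le> prob ({\<omega> \<in> A. Y \<omega> \<le> a} - {\<omega> \<in> A. Y \<omega> \<le> x})"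
      using x(1) sets[of "{a}"] sets[of "{..a}"] sets[of "{..x}"] by (intro finite_measure_mono) auto
    also have "\<dots> = prob A * (ccdf M A Y a - ccdf M A Y x)"
      using x(1) pos sets[of "{..a}"] sets[of "{..x}"]
      by (subst finite_measure_Diff) (auto simp: ccdf_def field_simps)
    also have "\<dots> \<le> \<epsilon>" using x(2) pos by (simp add: field_simps)
    finally show ?thesis .
  qed
  then have "prob {\<omega> \<in> A. Y \<omega> = a} \<le> 0" by (rule field_le_epsilon) simp
  then show ?thesis using measure_nonneg[of M "{\<omega> \<in> A. Y \<omega> = a}"] by linarith
qed

lemma ccdf_strict_mono_on_superset:
  assumes C: "C \<in> sets M" "0 < prob C" and C': "C' \<in> sets M" "0 < prob C'" "C' \<subseteq> C"
    and Y: "Y \<in> borel_measurable M" and sm: "strict_mono_on S (ccdf M C' Y)"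
  shows "strict_mono_on S (ccdf M C Y)"
proof (rule strict_mono_onI)
  note [measurable] = Y
  have slab: "prob {\<omega> \<in> A. Y \<omega> \<le> y} - prob {\<omega> \<in> A. Y \<omega> \<le> x} = prob {\<omega> \<in> A. x < Y \<omega> \<and> Y \<omega> \<le> y}"
    if "A \<in> sets M" "x \<le> y" for A x y
  proof -
    have "{\<omega> \<in> A. Y \<omega> \<le> z} \<in> sets M" for z
      using that(1) by (rule sets_restrict_pred) measurable
    then have "prob ({\<omega> \<in> A. Y \<omega> \<le> y} - {\<omega> \<in> A. Y \<omega> \<le> x}) = prob {\<omega> \<in> A. Y \<omega> \<le> y} - prob {\<omega> \<in> A. Y \<omega> \<le> x}"
      using that(2) by (intro finite_measure_Diff) auto
    moreover have "{\<omega> \<in> A. Y \<omega> \<le> y} - {\<omega> \<in> A. Y \<omega> \<le> x} = {\<omega> \<in> A. x < Y \<omega> \<and> Y \<omega> \<le> y}"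
      using that(2) by auto
    ultimately show ?thesis by simp
  qed
  fix x y assume "x \<in> S" "y \<in> S" "x < y"
  with sm have "ccdf M C' Y x < ccdf M C' Y y" by (simp add: strict_mono_onD)
  then have "0 < prob {\<omega> \<in> C'. x < Y \<omega> \<and> Y \<omega> \<le> y}"
    using C'(2) slab[OF C'(1), of x y] \<open>x < y\<close> by (simp add: ccdf_def divide_less_cancel)
  also have "\<dots> \<le> prob {\<omega> \<in> C. x < Y \<omega> \<and> Y \<omega> \<le> y}"
    using C(1) C'(3) by (intro finite_measure_mono sets_restrict_pred) auto
  finally show "ccdf M C Y x < ccdf M C Y y"
    using C(2) slab[OF C(1), of x y] \<open>x < y\<close> by (simp add: ccdf_def divide_strict_right_mono)
qed

lemma qinv_ccdf_cancel:
  assumes C: "C \<in> sets M" "0 < prob C" and Y: "Y \<in> borel_measurable M"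
    and supp: "AE \<omega> in M. Y \<omega> \<in> S" "is_interval S" "strict_mono_on S (ccdf M C Y)"
    and level: "0 < ccdf M C Y y" "ccdf M C Y y < 1"
  shows "qinv (ccdf M C Y) (ccdf M C Y y) = y"
  unfolding qinv_def
proof (rule cInf_eq_minimum)
  let ?F = "ccdf M C Y"
  note [measurable] = Y
  have below: "{\<omega> \<in> C. Y \<omega> \<le> z} \<in> sets M" for z
    using C(1) by (rule sets_restrict_pred) measurable
  fix x assume "x \<in> {x. ?F y \<le> ?F x}"
  show "y \<le> x"
  proof (rule ccontr)
    assume "\<not> y \<le> x"
    then have "x < y" by simp
    with \<open>x \<in> _\<close> have Fx: "?F x = ?F y" using ccdf_mono[OF _ below] by (simp add: order_antisym)
    have "0 < prob {\<omega> \<in> C. Y \<omega> \<le> x}"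
      using Fx level(1) C(2) by (simp add: ccdf_def zero_less_divide_iff)
    then obtain \<omega>1 where \<omega>1: "\<omega>1 \<in> C" "Y \<omega>1 \<le> x" "Y \<omega>1 \<in> S"
      using AE_witness[OF below _ supp(1)] by blast
    have "prob {\<omega> \<in> C. Y \<omega> \<le> y} < prob C"
      using level(2) C(2) by (simp add: ccdf_def)
    then have "0 < prob (C - {\<omega> \<in> C. Y \<omega> \<le> y})"
      using below C by (subst finite_measure_Diff) auto
    then obtain \<omega>2 where "\<omega>2 \<in> C - {\<omega> \<in> C. Y \<omega> \<le> y}" "Y \<omega>2 \<in> S"
      using AE_witness[OF _ _ supp(1)] C(1) below by blast
    then have \<omega>2: "y < Y \<omega>2" "Y \<omega>2 \<in> S" by auto
    have "z \<in> S" if "Y \<omega>1 \<le> z" "z \<le> Y \<omega>2" for z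
      using supp(2) \<omega>1(3) \<omega>2(2) that unfolding is_interval_1 by blast
    then have "x \<in> S" "y \<in> S" using \<omega>1(2) \<omega>2(1) \<open>x < y\<close> by auto
    then have "?F x < ?F y" using strict_mono_onD[OF supp(3)] \<open>x < y\<close> by blast
    then show False using Fx by simp
  qed
qed simp

end

section \<open>The multi-group fuzzy design\<close>

locale fuzzy_did = prob_space M for M :: "'a measure" +
  fixes Y0 Y1 V :: "'a \<Rightarrow> real" and G T :: "'a \<Rightarrow> nat"
    and v :: "nat \<Rightarrow> nat \<Rightarrow> real" and gbar :: nat
  assumes meas_Y0 [measurable]: "Y0 \<in> borel_measurable M" and meas_Y1 [measurable]: "Y1 \<in> borel_measurable M"
    and meas_V [measurable]: "V \<in> borel_measurable M"
    and meas_G [measurable]: "G \<in> measurable M (count_space UNIV)"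
    and meas_T [measurable]: "T \<in> measurable M (count_space UNIV)"
    and int_Y0: "integrable M Y0" and int_Y1: "integrable M Y1"
    and G_range: "\<forall>\<omega>\<in>space M. G \<omega> \<le> gbar"
    and T_range: "\<forall>\<omega>\<in>space M. T \<omega> \<le> 1"
    and cells_pos: "\<forall>g\<le>gbar. \<forall>t\<le>1. 0 < measure M (evt M (\<lambda>\<omega>. G \<omega> = g \<and> T \<omega> = t))"
    and V_indep_T: "\<forall>B\<in>sets borel. \<forall>g t.
        measure M (evt M (\<lambda>\<omega>. V \<omega> \<in> B \<and> T \<omega> = t \<and> G \<omega> = g)) * measure M (evt M (\<lambda>\<omega>. G \<omega> = g))
      = measure M (evt M (\<lambda>\<omega>. V \<omega> \<in> B \<and> G \<omega> = g)) * measure M (evt M (\<lambda>\<omega>. T \<omega> = t \<and> G \<omega> = g))"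
    and G_indep_T: "indep_var (count_space UNIV) G (count_space UNIV) T"
    and stable_group: "\<exists>g\<le>gbar. EDgt M (dobs v V G T) G T g 1 = EDgt M (dobs v V G T) G T g 0"
    and increasing_groups: "0 < measure M (evt M (\<lambda>\<omega>. gstar M (dobs v V G T) G T \<omega> = 1))"
    and decreasing_groups: "0 < measure M (evt M (\<lambda>\<omega>. gstar M (dobs v V G T) G T \<omega> = -1))"
begin

abbreviation "D0 \<equiv> treat v V G 0"
abbreviation "D1 \<equiv> treat v V G 1"
abbreviation "D \<equiv> dobs v V G T"
abbreviation "Y \<equiv> yobs D Y0 Y1"
abbreviation "Gs \<equiv> gstar M D G T"
abbreviation "Pt t \<equiv> prob (evt M (\<lambda>\<omega>. T \<omega> = t))"
abbreviation "PG k \<equiv> prob (evt M (\<lambda>\<omega>. Gs \<omega> = k))"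
abbreviation "switchers k \<equiv> evt M (\<lambda>\<omega>. Gs \<omega> = k \<and> T \<omega> = 1 \<and> D0 \<omega> \<noteq> D1 \<omega>)"
abbreviation "Ypot d \<equiv> (if d = 0 then Y0 else Y1)"

lemma prob_G_T: "prob (evt M (\<lambda>\<omega>. G \<omega> = g \<and> T \<omega> = t)) = prob (evt M (\<lambda>\<omega>. G \<omega> = g)) * Pt t"
proof -
  have "prob ((\<lambda>\<omega>. (G \<omega>, T \<omega>)) -` ({g} \<times> {t}) \<inter> space M) = prob (G -` {g} \<inter> space M) * prob (T -` {t} \<inter> space M)"
    by (rule indep_varD[OF G_indep_T]) auto
  moreover have "(\<lambda>\<omega>. (G \<omega>, T \<omega>)) -` ({g} \<times> {t}) \<inter> space M = evt M (\<lambda>\<omega>. G \<omega> = g \<and> T \<omega> = t)"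
    "G -` {g} \<inter> space M = evt M (\<lambda>\<omega>. G \<omega> = g)" "T -` {t} \<inter> space M = evt M (\<lambda>\<omega>. T \<omega> = t)"
    by (auto simp: evt_def)
  ultimately show ?thesis by simp
qed

lemma prob_G_pos: "g \<le> gbar \<Longrightarrow> 0 < prob (evt M (\<lambda>\<omega>. G \<omega> = g))"
  using cells_pos prob_G_T[of g 0] by (fastforce simp: zero_less_mult_iff)

lemma prob_T_pos: "t \<le> 1 \<Longrightarrow> 0 < Pt t"
  using cells_pos prob_G_T[of 0 t] by (fastforce simp: zero_less_mult_iff)

lemma evt_G_empty: "gbar < g \<Longrightarrow> evt M (\<lambda>\<omega>. G \<omega> = g \<and> Q \<omega>) = {}"
  using G_range by (auto simp: evt_def)

lemma prob_G_T_V: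
  assumes "B \<in> sets borel"
  shows "prob (evt M (\<lambda>\<omega>. G \<omega> = g \<and> T \<omega> = t \<and> V \<omega> \<in> B)) = prob (evt M (\<lambda>\<omega>. G \<omega> = g \<and> V \<omega> \<in> B)) * Pt t"
proof (cases "g \<le> gbar")
  case True
  have evts: "evt M (\<lambda>\<omega>. V \<omega> \<in> B \<and> T \<omega> = t \<and> G \<omega> = g) = evt M (\<lambda>\<omega>. G \<omega> = g \<and> T \<omega> = t \<and> V \<omega> \<in> B)"
    "evt M (\<lambda>\<omega>. V \<omega> \<in> B \<and> G \<omega> = g) = evt M (\<lambda>\<omega>. G \<omega> = g \<and> V \<omega> \<in> B)"
    "evt M (\<lambda>\<omega>. T \<omega> = t \<and> G \<omega> = g) = evt M (\<lambda>\<omega>. G \<omega> = g \<and> T \<omega> = t)"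
    by (auto simp: evt_def)
  have "prob (evt M (\<lambda>\<omega>. G \<omega> = g \<and> T \<omega> = t \<and> V \<omega> \<in> B)) * prob (evt M (\<lambda>\<omega>. G \<omega> = g))
      = (prob (evt M (\<lambda>\<omega>. G \<omega> = g \<and> V \<omega> \<in> B)) * Pt t) * prob (evt M (\<lambda>\<omega>. G \<omega> = g))"
    using V_indep_T[rule_format, OF assms, of t g] unfolding evts prob_G_T by (simp only: mult_ac)
  then show ?thesis using prob_G_pos[OF True] by simp
qed (simp add: evt_G_empty)

text \<open>Given G = g, the pair (D(0), D(1)) is a function of V, so Assumption 1 applies to it.\<close>

lemma prob_G_T_treatments:
  "prob (evt M (\<lambda>\<omega>. G \<omega> = g \<and> T \<omega> = t \<and> R (D0 \<omega>) (D1 \<omega>)))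
     = prob (evt M (\<lambda>\<omega>. G \<omega> = g \<and> R (D0 \<omega>) (D1 \<omega>))) * Pt t"
proof -
  let ?B = "{x. R (if v g 0 \<le> x then 1 else 0) (if v g 1 \<le> x then 1 else 0)}"
  have "?B = {x. (v g 0 \<le> x \<and> v g 1 \<le> x \<and> R 1 1) \<or> (v g 0 \<le> x \<and> \<not> v g 1 \<le> x \<and> R 1 0)
      \<or> (\<not> v g 0 \<le> x \<and> v g 1 \<le> x \<and> R 0 1) \<or> (\<not> v g 0 \<le> x \<and> \<not> v g 1 \<le> x \<and> R 0 0)}"
    by auto
  then have B: "?B \<in> sets borel" by simp
  have evts: "evt M (\<lambda>\<omega>. G \<omega> = g \<and> T \<omega> = t \<and> R (D0 \<omega>) (D1 \<omega>)) = evt M (\<lambda>\<omega>. G \<omega> = g \<and> T \<omega> = t \<and> V \<omega> \<in> ?B)"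
    "evt M (\<lambda>\<omega>. G \<omega> = g \<and> R (D0 \<omega>) (D1 \<omega>)) = evt M (\<lambda>\<omega>. G \<omega> = g \<and> V \<omega> \<in> ?B)"
    by (auto simp: evt_def treat_def)
  show ?thesis unfolding evts using B by (rule prob_G_T_V)
qed

definition trend_sign :: "nat \<Rightarrow> int" where
  "trend_sign g = (if EDgt M D G T g 1 > EDgt M D G T g 0 then 1
      else if EDgt M D G T g 1 < EDgt M D G T g 0 then -1 else 0)"

lemma Gs_eq: "Gs \<omega> = trend_sign (G \<omega>)"
  by (simp add: gstar_def trend_sign_def)

lemma measurable_Gs [measurable]: "Gs \<in> measurable M (count_space UNIV)"
  unfolding Gs_eq[abs_def] by measurable

definition sign_groups :: "int \<Rightarrow> nat set" where
  "sign_groups k = {g. g \<le> gbar \<and> trend_sign g = k}"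

lemma finite_sign_groups [simp]: "finite (sign_groups k)"
  unfolding sign_groups_def by simp

lemma evt_Gs_UN: "evt M (\<lambda>\<omega>. Gs \<omega> = k \<and> Q \<omega>) = (\<Union>g\<in>sign_groups k. evt M (\<lambda>\<omega>. G \<omega> = g \<and> Q \<omega>))"
  using G_range by (auto simp: evt_def sign_groups_def Gs_eq)

lemma disjoint_family_on_G: "disjoint_family_on (\<lambda>g. evt M (\<lambda>\<omega>. G \<omega> = g \<and> Q \<omega>)) I"
  by (auto simp: disjoint_family_on_def evt_def)

lemma prob_Gs_sum:
  assumes [measurable]: "Measurable.pred M Q"
  shows "prob (evt M (\<lambda>\<omega>. Gs \<omega> = k \<and> Q \<omega>)) = (\<Sum>g\<in>sign_groups k. prob (evt M (\<lambda>\<omega>. G \<omega> = g \<and> Q \<omega>)))"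
  unfolding evt_Gs_UN by (rule finite_measure_finite_Union) (auto intro: disjoint_family_on_G)

lemma set_integral_Gs_sum:
  fixes X :: "'a \<Rightarrow> real"
  assumes [measurable]: "Measurable.pred M Q" and X: "set_integrable M (evt M Q) X"
  shows "(LINT \<omega>:evt M (\<lambda>\<omega>. Gs \<omega> = k \<and> Q \<omega>)|M. X \<omega>)
    = (\<Sum>g\<in>sign_groups k. LINT \<omega>:evt M (\<lambda>\<omega>. G \<omega> = g \<and> Q \<omega>)|M. X \<omega>)"
  unfolding evt_Gs_UN
proof (rule set_integral_finite_Union[where A="\<lambda>g. evt M (\<lambda>\<omega>. G \<omega> = g \<and> Q \<omega>)"])
  show "set_integrable M (evt M (\<lambda>\<omega>. G \<omega> = g \<and> Q \<omega>)) X" for g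
    by (rule set_integrable_subset[OF X]) (auto simp: evt_def)
qed (auto intro: disjoint_family_on_G)

lemma PG_sum: "PG k = (\<Sum>g\<in>sign_groups k. prob (evt M (\<lambda>\<omega>. G \<omega> = g)))"
  using prob_Gs_sum[of "\<lambda>_. True" k] by simp

lemma prob_Gs_T: "prob (evt M (\<lambda>\<omega>. Gs \<omega> = k \<and> T \<omega> = t)) = PG k * Pt t"
  by (simp add: prob_Gs_sum PG_sum prob_G_T sum_distrib_right)

definition prob_treated :: "nat \<Rightarrow> nat \<Rightarrow> real" where
  "prob_treated g t = prob (evt M (\<lambda>\<omega>. G \<omega> = g \<and> treat v V G t \<omega> = 1))"

lemma treat_cases: "t \<le> 1 \<Longrightarrow> treat v V G t = (if t = 0 then D0 else D1)"
  by (auto simp: le_Suc_eq One_nat_def)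

lemma EDgt_eq:
  assumes "g \<le> gbar" "t \<le> 1"
  shows "EDgt M D G T g t = prob_treated g t / prob (evt M (\<lambda>\<omega>. G \<omega> = g))"
proof -
  let ?A = "evt M (\<lambda>\<omega>. G \<omega> = g \<and> T \<omega> = t)"
  have "(LINT \<omega>:?A|M. D \<omega>) = (LINT \<omega>:?A|M. indicator (evt M (\<lambda>\<omega>. treat v V G t \<omega> = 1)) \<omega>)"
    by (rule set_lebesgue_integral_cong) (auto simp: evt_def dobs_def treat_def)
  also have "\<dots> = prob (?A \<inter> evt M (\<lambda>\<omega>. treat v V G t \<omega> = 1))"
    by (rule set_integral_indicator_eq_prob) measurable
  also have "?A \<inter> evt M (\<lambda>\<omega>. treat v V G t \<omega> = 1)
      = evt M (\<lambda>\<omega>. G \<omega> = g \<and> T \<omega> = t \<and> (if t = 0 then D0 \<omega> else D1 \<omega>) = 1)"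
    using treat_cases[OF assms(2)] by (auto simp: evt_def)
  also have "prob \<dots> = prob_treated g t * Pt t"
    using prob_G_T_treatments[of g t "\<lambda>a b. (if t = 0 then a else b) = 1"] treat_cases[OF assms(2)]
    by (simp add: prob_treated_def)
  finally show ?thesis
    using prob_T_pos[OF assms(2)] by (simp add: EDgt_def cexp_def set_lebesgue_integral_def prob_G_T)
qed

lemma trend_sign_eq:
  assumes "g \<le> gbar"
  shows "trend_sign g =
    (if prob_treated g 0 < prob_treated g 1 then 1 else if prob_treated g 1 < prob_treated g 0 then -1 else 0)"
  using prob_G_pos[OF assms] by (simp add: trend_sign_def EDgt_eq[OF assms] divide_less_cancel)

lemma prob_treated_antimono: "v g t \<le> v g s \<Longrightarrow> prob_treated g s \<le> prob_treated g t"
  unfolding prob_treated_def by (intro finite_measure_mono) (auto simp: evt_def treat_def)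

lemma thresholds_of_trend_sign:
  assumes "g \<le> gbar"
  shows "trend_sign g = 1 \<Longrightarrow> v g 1 < v g 0" and "trend_sign g = -1 \<Longrightarrow> v g 0 < v g 1"
  using prob_treated_antimono[of g 0 1] prob_treated_antimono[of g 1 0]
  by (auto simp: trend_sign_eq[OF assms] split: if_splits) (meson not_less)+

lemma prob_switchers_in_group: "prob (evt M (\<lambda>\<omega>. G \<omega> = g \<and> D0 \<omega> \<noteq> D1 \<omega>)) = \<bar>prob_treated g 1 - prob_treated g 0\<bar>"
proof (cases "v g 1 \<le> v g 0")
  case True
  then have "evt M (\<lambda>\<omega>. G \<omega> = g \<and> D0 \<omega> \<noteq> D1 \<omega>)
      = evt M (\<lambda>\<omega>. G \<omega> = g \<and> D1 \<omega> = 1) - evt M (\<lambda>\<omega>. G \<omega> = g \<and> D0 \<omega> = 1)"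
    "evt M (\<lambda>\<omega>. G \<omega> = g \<and> D0 \<omega> = 1) \<subseteq> evt M (\<lambda>\<omega>. G \<omega> = g \<and> D1 \<omega> = 1)"
    by (auto simp: evt_def treat_def)
  then show ?thesis using prob_treated_antimono[OF True] by (simp add: finite_measure_Diff prob_treated_def)
next
  case False
  then have "evt M (\<lambda>\<omega>. G \<omega> = g \<and> D0 \<omega> \<noteq> D1 \<omega>)
      = evt M (\<lambda>\<omega>. G \<omega> = g \<and> D0 \<omega> = 1) - evt M (\<lambda>\<omega>. G \<omega> = g \<and> D1 \<omega> = 1)"
    "evt M (\<lambda>\<omega>. G \<omega> = g \<and> D1 \<omega> = 1) \<subseteq> evt M (\<lambda>\<omega>. G \<omega> = g \<and> D0 \<omega> = 1)"
    by (auto simp: evt_def treat_def)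
  then show ?thesis using prob_treated_antimono[of g 0 1] False by (simp add: finite_measure_Diff prob_treated_def)
qed

text \<open>In a stable group P(D(1) = 1) = P(D(0) = 1), and since the thresholds are nested the
  switchers have probability |P(D(1) = 1) - P(D(0) = 1)| = 0.\<close>

lemma AE_stable_no_switchers: "AE \<omega> in M. Gs \<omega> = 0 \<longrightarrow> D0 \<omega> = D1 \<omega>"
proof -
  have "prob (evt M (\<lambda>\<omega>. Gs \<omega> = 0 \<and> D0 \<omega> \<noteq> D1 \<omega>)) = 0"
    by (simp add: prob_Gs_sum prob_switchers_in_group sign_groups_def)
      (rule sum.neutral, auto simp: trend_sign_eq split: if_splits)
  then have "AE \<omega> in M. \<omega> \<notin> evt M (\<lambda>\<omega>. Gs \<omega> = 0 \<and> D0 \<omega> \<noteq> D1 \<omega>)"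
    by (subst AE_iff_null_sets[symmetric]) (auto simp: null_sets_def emeasure_eq_measure)
  then show ?thesis by (auto simp: evt_def elim: eventually_mono)
qed

lemma prob_switchers_pos:
  assumes "k \<noteq> 0" "0 < PG k"
  shows "0 < prob (switchers k)"
proof -
  have "sign_groups k \<noteq> {}" using assms(2) by (auto simp: PG_sum)
  moreover have "0 < \<bar>prob_treated g 1 - prob_treated g 0\<bar> * Pt 1" if "g \<in> sign_groups k" for g
    using that assms(1) prob_T_pos[of 1] by (auto simp: sign_groups_def trend_sign_eq split: if_splits)
  ultimately show ?thesis
    using prob_G_T_treatments[of _ 1 "(\<noteq>)"] by (simp add: prob_Gs_sum prob_switchers_in_group sum_pos)
qed

lemma PG0_pos: "0 < PG 0"
proof -
  obtain g where "g \<le> gbar" "trend_sign g = 0"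
    using stable_group by (auto simp: trend_sign_def)
  then have "prob (evt M (\<lambda>\<omega>. G \<omega> = g)) \<le> PG 0"
    unfolding PG_sum by (intro member_le_sum) (auto simp: sign_groups_def)
  then show ?thesis using prob_G_pos[OF \<open>g \<le> gbar\<close>] by simp
qed

lemma Gs_cases: "Gs \<omega> = 1 \<or> Gs \<omega> = 0 \<or> Gs \<omega> = -1"
  by (simp add: Gs_eq trend_sign_def)

lemma treatment_change_sign:
  assumes "\<omega> \<in> space M" "Gs \<omega> \<noteq> 0"
  shows "D1 \<omega> - D0 \<omega> = (if D0 \<omega> = D1 \<omega> then 0 else of_int (Gs \<omega>))"
proof -
  have g: "G \<omega> \<le> gbar" using G_range assms(1) by auto
  consider "trend_sign (G \<omega>) = 1" | "trend_sign (G \<omega>) = -1"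
    using assms(2) Gs_cases[of \<omega>] by (auto simp: Gs_eq)
  then show ?thesis
  proof cases
    case 1 then show ?thesis using thresholds_of_trend_sign(1)[OF g] by (auto simp: Gs_eq treat_def)
  next
    case 2 then show ?thesis using thresholds_of_trend_sign(2)[OF g] by (auto simp: Gs_eq treat_def)
  qed
qed

lemma set_integral_treatment_change:
  fixes X :: "'a \<Rightarrow> real"
  assumes [measurable]: "X \<in> borel_measurable M"
  shows "(LINT \<omega>:evt M (\<lambda>\<omega>. Gs \<omega> = k \<and> T \<omega> = 1)|M. (D1 \<omega> - D0 \<omega>) * X \<omega>)
    = of_int k * (LINT \<omega>:switchers k|M. X \<omega>)"
proof -
  let ?A = "evt M (\<lambda>\<omega>. Gs \<omega> = k \<and> T \<omega> = 1)"
  have "AE \<omega> in M. indicator ?A \<omega> * ((D1 \<omega> - D0 \<omega>) * X \<omega>) = of_int k * (indicator (switchers k) \<omega> * X \<omega>)"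
    using AE_stable_no_switchers AE_space
  proof eventually_elim
    case (elim \<omega>)
    show ?case
    proof (cases "\<omega> \<in> ?A")
      case True
      then have "Gs \<omega> = k" "T \<omega> = 1" "\<omega> \<in> space M" by (auto simp: evt_def)
      have "D1 \<omega> - D0 \<omega> = (if D0 \<omega> = D1 \<omega> then 0 else of_int k)"
      proof (cases "k = 0")
        case True
        then show ?thesis using elim(1) \<open>Gs \<omega> = k\<close> by simp
      next
        case False
        then show ?thesis using treatment_change_sign[OF \<open>\<omega> \<in> space M\<close>] \<open>Gs \<omega> = k\<close> by simp
      qed
      moreover have "\<omega> \<in> switchers k \<longleftrightarrow> D0 \<omega> \<noteq> D1 \<omega>"
        using True by (auto simp: evt_def)
      ultimately show ?thesis using True by simp
    next
      case False
      then have "\<omega> \<notin> switchers k" by (auto simp: evt_def)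
      with False show ?thesis by simp
    qed
  qed
  then have "(LINT \<omega>|M. indicator ?A \<omega> * ((D1 \<omega> - D0 \<omega>) * X \<omega>))
      = (LINT \<omega>|M. of_int k * (indicator (switchers k) \<omega> * X \<omega>))"
    by (rule integral_cong_AE[rotated 2]) measurable
  then show ?thesis
    unfolding set_lebesgue_integral_def by simp
qed

lemma set_integral_Gs_T:
  fixes X :: "'a \<Rightarrow> real"
  assumes "set_integrable M (evt M (\<lambda>\<omega>. T \<omega> = t)) X"
  shows "(LINT \<omega>:evt M (\<lambda>\<omega>. Gs \<omega> = k \<and> T \<omega> = t)|M. X \<omega>)
    = (\<Sum>g\<in>sign_groups k. LINT \<omega>:evt M (\<lambda>\<omega>. G \<omega> = g \<and> T \<omega> = t)|M. X \<omega>)"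
  using assms by (rule set_integral_Gs_sum[rotated]) measurable

lemma cexpGs_eq: "cexpGs M Gs T X k t = (LINT \<omega>:evt M (\<lambda>\<omega>. Gs \<omega> = k \<and> T \<omega> = t)|M. X \<omega>) / (PG k * Pt t)"
  by (simp add: cexpGs_def cexp_def set_lebesgue_integral_def prob_Gs_T)

lemma set_integral_period1_outcome:
  fixes W0 W1 :: "'a \<Rightarrow> real"
  assumes W: "integrable M W0" "integrable M W1"
  shows "(LINT \<omega>:evt M (\<lambda>\<omega>. Gs \<omega> = k \<and> T \<omega> = 1)|M. yobs D W0 W1 \<omega>)
    = (\<Sum>g\<in>sign_groups k. LINT \<omega>:evt M (\<lambda>\<omega>. G \<omega> = g \<and> T \<omega> = 1)|M. yobs D0 W0 W1 \<omega>)
      + of_int k * (LINT \<omega>:switchers k|M. W1 \<omega> - W0 \<omega>)"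
proof -
  let ?A = "evt M (\<lambda>\<omega>. Gs \<omega> = k \<and> T \<omega> = 1)"
  let ?dW = "\<lambda>\<omega>. (D1 \<omega> - D0 \<omega>) * (W1 \<omega> - W0 \<omega>)"
  have [measurable]: "W0 \<in> borel_measurable M" "W1 \<in> borel_measurable M"
    using W by (simp_all add: borel_measurable_integrable)
  have int_stay: "integrable M (yobs D0 W0 W1)"
    by (rule integrable_yobs[OF W _ abs_treat_le_1]) measurable
  have int_change: "integrable M ?dW"
  proof (rule integrable_bounded_mult)
    show "integrable M (\<lambda>\<omega>. W1 \<omega> - W0 \<omega>)" using W by simp
    show "(\<lambda>\<omega>. D1 \<omega> - D0 \<omega>) \<in> borel_measurable M" by measurable
  qed (simp add: treat_def)
  have "(LINT \<omega>:?A|M. yobs D W0 W1 \<omega>) = (LINT \<omega>:?A|M. yobs D0 W0 W1 \<omega> + ?dW \<omega>)"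
    by (rule set_lebesgue_integral_cong) (auto simp: evt_def yobs_eq dobs_def algebra_simps)
  also have "\<dots> = (LINT \<omega>:?A|M. yobs D0 W0 W1 \<omega>) + (LINT \<omega>:?A|M. ?dW \<omega>)"
    using int_stay int_change by (intro set_integral_add set_integrable_of_integrable) measurable
  also have "(LINT \<omega>:?A|M. yobs D0 W0 W1 \<omega>)
      = (\<Sum>g\<in>sign_groups k. LINT \<omega>:evt M (\<lambda>\<omega>. G \<omega> = g \<and> T \<omega> = 1)|M. yobs D0 W0 W1 \<omega>)"
    using int_stay by (intro set_integral_Gs_T set_integrable_of_integrable) measurable
  also have "(LINT \<omega>:?A|M. ?dW \<omega>) = of_int k * (LINT \<omega>:switchers k|M. W1 \<omega> - W0 \<omega>)"
    by (rule set_integral_treatment_change) measurable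
  finally show ?thesis .
qed

text \<open>The common core of the three Wald ratios: if, group by group, Z in period 0 predicts up to
  the trend \<kappa> the period-1 outcome that units would have had without switching, then the
  numerator of the G* = k ratio is \<kappa> plus the switchers' contribution.\<close>

lemma trend_Gs_switchers:
  fixes W0 W1 Z :: "'a \<Rightarrow> real"
  assumes PG: "0 < PG k" and W: "integrable M W0" "integrable M W1"
    and Z: "set_integrable M (evt M (\<lambda>\<omega>. T \<omega> = 0)) Z"
    and groups: "\<And>g. g \<in> sign_groups k \<Longrightarrow>
      (LINT \<omega>:evt M (\<lambda>\<omega>. G \<omega> = g \<and> T \<omega> = 0)|M. Z \<omega>) / Pt 0
        = (LINT \<omega>:evt M (\<lambda>\<omega>. G \<omega> = g \<and> T \<omega> = 1)|M. yobs D0 W0 W1 \<omega>) / Pt 1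
          - \<kappa> * prob (evt M (\<lambda>\<omega>. G \<omega> = g))"
  shows "cexpGs M Gs T (yobs D W0 W1) k 1 - cexpGs M Gs T Z k 0
    = \<kappa> + of_int k * (LINT \<omega>:switchers k|M. W1 \<omega> - W0 \<omega>) / (Pt 1 * PG k)"
proof -
  let ?sw = "of_int k * (LINT \<omega>:switchers k|M. W1 \<omega> - W0 \<omega>)"
  define S1 where "S1 = (\<Sum>g\<in>sign_groups k. LINT \<omega>:evt M (\<lambda>\<omega>. G \<omega> = g \<and> T \<omega> = 1)|M. yobs D0 W0 W1 \<omega>)"
  define S0 where "S0 = (\<Sum>g\<in>sign_groups k. LINT \<omega>:evt M (\<lambda>\<omega>. G \<omega> = g \<and> T \<omega> = 0)|M. Z \<omega>)"
  have "S1 / Pt 1 = (\<Sum>g\<in>sign_groups k. (LINT \<omega>:evt M (\<lambda>\<omega>. G \<omega> = g \<and> T \<omega> = 0)|M. Z \<omega>) / Pt 0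
      + \<kappa> * prob (evt M (\<lambda>\<omega>. G \<omega> = g)))"
    unfolding S1_def sum_divide_distrib by (rule sum.cong) (simp_all add: groups)
  also have "\<dots> = S0 / Pt 0 + \<kappa> * PG k"
    by (simp add: S0_def PG_sum sum.distrib sum_divide_distrib sum_distrib_left)
  finally have groups_sum: "S1 / Pt 1 - S0 / Pt 0 = \<kappa> * PG k" by simp
  have "cexpGs M Gs T (yobs D W0 W1) k 1 - cexpGs M Gs T Z k 0 = (S1 + ?sw) / (PG k * Pt 1) - S0 / (PG k * Pt 0)"
    by (simp add: cexpGs_eq set_integral_period1_outcome[OF W] set_integral_Gs_T[OF Z] S0_def S1_def)
  also have "\<dots> = (S1 / Pt 1 - S0 / Pt 0) / PG k + ?sw / (Pt 1 * PG k)"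
    using PG prob_T_pos[of 0] prob_T_pos[of 1] by (simp add: field_simps)
  finally show ?thesis using PG by (simp add: groups_sum)
qed

lemma set_integral_D0:
  "(LINT \<omega>:evt M (\<lambda>\<omega>. G \<omega> = g \<and> T \<omega> = t)|M. D0 \<omega>) = prob (evt M (\<lambda>\<omega>. G \<omega> = g \<and> D0 \<omega> = 1)) * Pt t"
proof -
  have "(LINT \<omega>:evt M (\<lambda>\<omega>. G \<omega> = g \<and> T \<omega> = t)|M. D0 \<omega>)
      = (LINT \<omega>:evt M (\<lambda>\<omega>. G \<omega> = g \<and> T \<omega> = t)|M. indicator (evt M (\<lambda>\<omega>. D0 \<omega> = 1)) \<omega>)"
    by (rule set_lebesgue_integral_cong) (auto simp: evt_def treat_def)
  also have "\<dots> = prob (evt M (\<lambda>\<omega>. G \<omega> = g \<and> T \<omega> = t \<and> D0 \<omega> = 1))"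
    by (subst set_integral_indicator_eq_prob) (auto intro!: arg_cong[where f=prob] simp: evt_def)
  finally show ?thesis using prob_G_T_treatments[of g t "\<lambda>a b. a = 1"] by simp
qed

lemma wald_denominator:
  assumes "0 < PG k"
  shows "cexpGs M Gs T D k 1 - cexpGs M Gs T D k 0 = of_int k * prob (switchers k) / (Pt 1 * PG k)"
proof -
  \<comment> \<open>D is the observed outcome for the potential outcomes 0 and 1.\<close>
  have "cexpGs M Gs T (yobs D (\<lambda>_. 0) (\<lambda>_. 1)) k 1 - cexpGs M Gs T D k 0
      = 0 + of_int k * (LINT \<omega>:switchers k|M. 1 - 0) / (Pt 1 * PG k)"
  proof (rule trend_Gs_switchers[OF assms])
    fix g
    have "(LINT \<omega>:evt M (\<lambda>\<omega>. G \<omega> = g \<and> T \<omega> = 0)|M. D \<omega>) = (LINT \<omega>:evt M (\<lambda>\<omega>. G \<omega> = g \<and> T \<omega> = 0)|M. D0 \<omega>)"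
      by (rule set_lebesgue_integral_cong) (auto simp: evt_def dobs_def)
    then show "(LINT \<omega>:evt M (\<lambda>\<omega>. G \<omega> = g \<and> T \<omega> = 0)|M. D \<omega>) / Pt 0
        = (LINT \<omega>:evt M (\<lambda>\<omega>. G \<omega> = g \<and> T \<omega> = 1)|M. yobs D0 (\<lambda>_. 0) (\<lambda>_. 1) \<omega>) / Pt 1 - 0 * prob (evt M (\<lambda>\<omega>. G \<omega> = g))"
      using prob_T_pos[of 0] prob_T_pos[of 1] by (simp add: yobs_01 set_integral_D0)
  qed (auto intro!: set_integrable_of_integrable integrable_bounded_mult[of _ "\<lambda>_. 1", simplified] abs_dobs_le_1)
  then show ?thesis by (simp add: yobs_01 set_integral_const)
qed

lemma cexp_switchers:
  fixes X :: "'a \<Rightarrow> real"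
  assumes X: "integrable M X"
  shows "cexp M (evt M (\<lambda>\<omega>. D0 \<omega> \<noteq> D1 \<omega> \<and> T \<omega> = 1)) X
    = ((LINT \<omega>:switchers 1|M. X \<omega>) + (LINT \<omega>:switchers (-1)|M. X \<omega>)) / (prob (switchers 1) + prob (switchers (-1)))"
proof -
  let ?S = "evt M (\<lambda>\<omega>. D0 \<omega> \<noteq> D1 \<omega> \<and> T \<omega> = 1)"
  have [measurable]: "X \<in> borel_measurable M" using X by (rule borel_measurable_integrable)
  have ae: "AE \<omega> in M. \<omega> \<in> switchers 1 \<union> switchers (-1) \<longleftrightarrow> \<omega> \<in> ?S"
    using AE_stable_no_switchers
  proof eventually_elim
    case (elim \<omega>)
    then show ?case using Gs_cases[of \<omega>] unfolding evt_def by auto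
  qed
  have disj: "switchers 1 \<inter> switchers (-1) = {}" by (auto simp: evt_def)
  have "prob ?S = prob (switchers 1 \<union> switchers (-1))"
    by (rule finite_measure_eq_AE[OF ae, symmetric]) measurable
  also have "\<dots> = prob (switchers 1) + prob (switchers (-1))"
    using disj by (intro finite_measure_Union) measurable
  finally have prob_S: "prob ?S = prob (switchers 1) + prob (switchers (-1))" .
  have "(LINT \<omega>:?S|M. X \<omega>) = (LINT \<omega>:switchers 1 \<union> switchers (-1)|M. X \<omega>)"
    by (rule set_integral_cong_set[OF _ _ ae]) (simp_all add: set_borel_measurable_def)
  also have "\<dots> = (LINT \<omega>:switchers 1|M. X \<omega>) + (LINT \<omega>:switchers (-1)|M. X \<omega>)"
    using disj X by (intro set_integral_Un set_integrable_of_integrable) measurable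
  finally show ?thesis
    using prob_S by (simp add: cexp_def set_lebesgue_integral_def)
qed

lemma weighted_wald_eq_late:
  assumes "W1 = (LINT \<omega>:switchers 1|M. Y1 \<omega> - Y0 \<omega>) / prob (switchers 1)"
    and "Wm = (LINT \<omega>:switchers (-1)|M. Y1 \<omega> - Y0 \<omega>) / prob (switchers (-1))"
  shows "w10 M D Gs T * W1 + (1 - w10 M D Gs T) * Wm
    = cexp M (evt M (\<lambda>\<omega>. D0 \<omega> \<noteq> D1 \<omega> \<and> T \<omega> = 1)) (\<lambda>\<omega>. Y1 \<omega> - Y0 \<omega>)"
proof -
  have PG: "0 < PG 1" "0 < PG (-1)" "0 < PG 0"
    using increasing_groups decreasing_groups PG0_pos by auto
  have pos: "0 < prob (switchers 1)" "0 < prob (switchers (-1))"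
    using PG by (auto intro: prob_switchers_pos)
  have "w10 M D Gs T = prob (switchers 1) / (prob (switchers 1) + prob (switchers (-1)))"
    using PG prob_T_pos[of 1]
    by (simp add: w10_def DIDs_def wald_denominator add_divide_distrib[symmetric] field_simps)
  then show ?thesis
    using weighted_ratio_eq[OF pos] int_Y0 int_Y1 by (simp add: assms cexp_switchers)
qed

subsection \<open>Wald-DID\<close>

lemma prob_G_T_D0:
  "prob (evt M (\<lambda>\<omega>. G \<omega> = g \<and> T \<omega> = t \<and> D0 \<omega> = e)) = prob (evt M (\<lambda>\<omega>. G \<omega> = g \<and> D0 \<omega> = e)) * Pt t"
  using prob_G_T_treatments[of g t "\<lambda>a b. a = e"] by simp

lemma set_integral_G_T_eq_cexp:
  "(LINT \<omega>:evt M (\<lambda>\<omega>. G \<omega> = g \<and> T \<omega> = t)|M. X \<omega>)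
    = cexp M (evt M (\<lambda>\<omega>. G \<omega> = g \<and> T \<omega> = t)) X * prob (evt M (\<lambda>\<omega>. G \<omega> = g)) * Pt t"
  by (simp add: set_integral_eq_cexp prob_G_T mult.assoc)

lemma set_integral_G_T_D0_eq_cexp:
  "(LINT \<omega>:evt M (\<lambda>\<omega>. G \<omega> = g \<and> T \<omega> = t \<and> D0 \<omega> = e)|M. X \<omega>)
    = cexp M (evt M (\<lambda>\<omega>. G \<omega> = g \<and> T \<omega> = t \<and> D0 \<omega> = e)) X * prob (evt M (\<lambda>\<omega>. G \<omega> = g \<and> D0 \<omega> = e)) * Pt t"
  by (simp add: set_integral_eq_cexp prob_G_T_D0 mult.assoc)

lemma set_integral_split_D0:
  fixes X :: "'a \<Rightarrow> real"
  assumes "set_integrable M (evt M (\<lambda>\<omega>. G \<omega> = g \<and> T \<omega> = t)) X"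
  shows "(LINT \<omega>:evt M (\<lambda>\<omega>. G \<omega> = g \<and> T \<omega> = t)|M. X \<omega>)
    = (LINT \<omega>:evt M (\<lambda>\<omega>. G \<omega> = g \<and> T \<omega> = t \<and> D0 \<omega> = 1)|M. X \<omega>)
      + (LINT \<omega>:evt M (\<lambda>\<omega>. G \<omega> = g \<and> T \<omega> = t \<and> D0 \<omega> = 0)|M. X \<omega>)"
proof -
  have "evt M (\<lambda>\<omega>. G \<omega> = g \<and> T \<omega> = t)
      = evt M (\<lambda>\<omega>. G \<omega> = g \<and> T \<omega> = t \<and> D0 \<omega> = 1) \<union> evt M (\<lambda>\<omega>. G \<omega> = g \<and> T \<omega> = t \<and> D0 \<omega> = 0)"
    by (auto simp: evt_def treat_def)
  moreover have "set_integrable M (evt M (\<lambda>\<omega>. G \<omega> = g \<and> T \<omega> = t \<and> D0 \<omega> = e)) X" for e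
    by (rule set_integrable_subset[OF assms]) (auto simp: evt_def)
  ultimately show ?thesis
    by (simp add: set_integral_Un disjoint_iff evt_def)
qed

lemma set_integral_yobs_D0:
  assumes "d \<le> 1"
  shows "(LINT \<omega>:evt M (\<lambda>\<omega>. G \<omega> = g \<and> T \<omega> = t \<and> D0 \<omega> = real d)|M. yobs D0 W0 W1 \<omega>)
    = (LINT \<omega>:evt M (\<lambda>\<omega>. G \<omega> = g \<and> T \<omega> = t \<and> D0 \<omega> = real d)|M. (if d = 0 then W0 else W1) \<omega>)"
proof (rule set_lebesgue_integral_cong)
  show "\<forall>\<omega>. \<omega> \<in> evt M (\<lambda>\<omega>. G \<omega> = g \<and> T \<omega> = t \<and> D0 \<omega> = real d) \<longrightarrow> yobs D0 W0 W1 \<omega> = (if d = 0 then W0 else W1) \<omega>"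
    using assms by (auto simp: evt_def yobs_def le_Suc_eq One_nat_def)
qed measurable

lemma trend_from_D0_cells:
  fixes Z :: "'a \<Rightarrow> real"
  assumes Z: "set_integrable M (evt M (\<lambda>\<omega>. T \<omega> = 0)) Z"
    and cells: "\<And>d. d \<le> 1 \<Longrightarrow>
      (LINT \<omega>:evt M (\<lambda>\<omega>. G \<omega> = g \<and> T \<omega> = 0 \<and> D0 \<omega> = real d)|M. Z \<omega>) / Pt 0
        = (LINT \<omega>:evt M (\<lambda>\<omega>. G \<omega> = g \<and> T \<omega> = 1 \<and> D0 \<omega> = real d)|M. Ypot d \<omega>) / Pt 1"
  shows "(LINT \<omega>:evt M (\<lambda>\<omega>. G \<omega> = g \<and> T \<omega> = 0)|M. Z \<omega>) / Pt 0
    = (LINT \<omega>:evt M (\<lambda>\<omega>. G \<omega> = g \<and> T \<omega> = 1)|M. yobs D0 Y0 Y1 \<omega>) / Pt 1"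
proof -
  have "set_integrable M (evt M (\<lambda>\<omega>. G \<omega> = g \<and> T \<omega> = 0)) Z"
    by (rule set_integrable_subset[OF Z]) (auto simp: evt_def)
  moreover have "set_integrable M (evt M (\<lambda>\<omega>. G \<omega> = g \<and> T \<omega> = 1)) (yobs D0 Y0 Y1)"
    by (intro set_integrable_of_integrable integrable_yobs[OF int_Y0 int_Y1 _ abs_treat_le_1]) measurable
  ultimately show ?thesis
    using cells[of 0] cells[of 1] set_integral_yobs_D0[of 0] set_integral_yobs_D0[of 1]
    by (simp add: set_integral_split_D0 add_divide_distrib)
qed

lemma set_integral_stay_outcome:
  assumes "t \<le> 1"
  shows "(LINT \<omega>:evt M (\<lambda>\<omega>. G \<omega> = g \<and> T \<omega> = t)|M. yobs D0 Y0 Y1 \<omega>) / Pt t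
    = cexp M (evt M (\<lambda>\<omega>. G \<omega> = g \<and> T \<omega> = t)) Y0 * prob (evt M (\<lambda>\<omega>. G \<omega> = g))
      + cexp M (evt M (\<lambda>\<omega>. G \<omega> = g \<and> T \<omega> = t \<and> D0 \<omega> = 1)) (\<lambda>\<omega>. Y1 \<omega> - Y0 \<omega>)
        * prob (evt M (\<lambda>\<omega>. G \<omega> = g \<and> D0 \<omega> = 1))"
proof -
  let ?A = "evt M (\<lambda>\<omega>. G \<omega> = g \<and> T \<omega> = t)"
  let ?on = "evt M (\<lambda>\<omega>. G \<omega> = g \<and> T \<omega> = t \<and> D0 \<omega> = 1)"
  let ?off = "evt M (\<lambda>\<omega>. G \<omega> = g \<and> T \<omega> = t \<and> D0 \<omega> = 0)"
  have int: "set_integrable M ?A X" if "integrable M X" for X :: "'a \<Rightarrow> real"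
    by (rule set_integrable_of_integrable[OF _ that]) measurable
  have int_on: "set_integrable M ?on X" if "integrable M X" for X :: "'a \<Rightarrow> real"
    by (rule set_integrable_of_integrable[OF _ that]) measurable
  have int_yobs: "integrable M (yobs D0 Y0 Y1)"
    by (rule integrable_yobs[OF int_Y0 int_Y1 _ abs_treat_le_1]) measurable
  have "(LINT \<omega>:?A|M. yobs D0 Y0 Y1 \<omega>) = (LINT \<omega>:?on|M. yobs D0 Y0 Y1 \<omega>) + (LINT \<omega>:?off|M. yobs D0 Y0 Y1 \<omega>)"
    by (rule set_integral_split_D0[OF int[OF int_yobs]])
  also have "(LINT \<omega>:?on|M. yobs D0 Y0 Y1 \<omega>) = (LINT \<omega>:?on|M. Y1 \<omega>)"
    using set_integral_yobs_D0[of 1 g t Y0 Y1] by simp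
  also have "(LINT \<omega>:?off|M. yobs D0 Y0 Y1 \<omega>) = (LINT \<omega>:?off|M. Y0 \<omega>)"
    using set_integral_yobs_D0[of 0 g t Y0 Y1] by simp
  finally have "(LINT \<omega>:?A|M. yobs D0 Y0 Y1 \<omega>) = (LINT \<omega>:?on|M. Y1 \<omega>) + (LINT \<omega>:?off|M. Y0 \<omega>)" .
  moreover have "(LINT \<omega>:?A|M. Y0 \<omega>) = (LINT \<omega>:?on|M. Y0 \<omega>) + (LINT \<omega>:?off|M. Y0 \<omega>)"
    by (rule set_integral_split_D0[OF int[OF int_Y0]])
  moreover have "(LINT \<omega>:?on|M. Y1 \<omega> - Y0 \<omega>) = (LINT \<omega>:?on|M. Y1 \<omega>) - (LINT \<omega>:?on|M. Y0 \<omega>)"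
    using int_on[OF int_Y1] int_on[OF int_Y0] by (rule set_integral_diff)
  ultimately have "(LINT \<omega>:?A|M. yobs D0 Y0 Y1 \<omega>) = (LINT \<omega>:?A|M. Y0 \<omega>) + (LINT \<omega>:?on|M. Y1 \<omega> - Y0 \<omega>)"
    by simp
  then show ?thesis
    using prob_T_pos[OF assms] by (simp add: set_integral_G_T_eq_cexp set_integral_G_T_D0_eq_cexp field_simps)
qed

lemma did_group_trend:
  assumes A3: "\<forall>g\<le>gbar. \<forall>g'\<le>gbar.
           cexp M (evt M (\<lambda>\<omega>. G \<omega> = g \<and> T \<omega> = 1)) Y0 - cexp M (evt M (\<lambda>\<omega>. G \<omega> = g \<and> T \<omega> = 0)) Y0
         = cexp M (evt M (\<lambda>\<omega>. G \<omega> = g' \<and> T \<omega> = 1)) Y0 - cexp M (evt M (\<lambda>\<omega>. G \<omega> = g' \<and> T \<omega> = 0)) Y0"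
    and A4: "\<forall>g\<le>gbar.
           cexp M (evt M (\<lambda>\<omega>. G \<omega> = g \<and> T \<omega> = 1 \<and> D0 \<omega> = 1)) (\<lambda>\<omega>. Y1 \<omega> - Y0 \<omega>)
         = cexp M (evt M (\<lambda>\<omega>. G \<omega> = g \<and> T \<omega> = 0 \<and> D0 \<omega> = 1)) (\<lambda>\<omega>. Y1 \<omega> - Y0 \<omega>)"
    and g: "g \<le> gbar"
  shows "(LINT \<omega>:evt M (\<lambda>\<omega>. G \<omega> = g \<and> T \<omega> = 0)|M. Y \<omega>) / Pt 0
    = (LINT \<omega>:evt M (\<lambda>\<omega>. G \<omega> = g \<and> T \<omega> = 1)|M. yobs D0 Y0 Y1 \<omega>) / Pt 1
      - (cexp M (evt M (\<lambda>\<omega>. G \<omega> = 0 \<and> T \<omega> = 1)) Y0 - cexp M (evt M (\<lambda>\<omega>. G \<omega> = 0 \<and> T \<omega> = 0)) Y0)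
        * prob (evt M (\<lambda>\<omega>. G \<omega> = g))"
proof -
  have Y_T0: "(LINT \<omega>:evt M (\<lambda>\<omega>. G \<omega> = g \<and> T \<omega> = 0)|M. Y \<omega>) = (LINT \<omega>:evt M (\<lambda>\<omega>. G \<omega> = g \<and> T \<omega> = 0)|M. yobs D0 Y0 Y1 \<omega>)"
    by (rule set_lebesgue_integral_cong) (auto simp: evt_def yobs_def dobs_def)
  have trend: "cexp M (evt M (\<lambda>\<omega>. G \<omega> = g \<and> T \<omega> = 1)) Y0 - cexp M (evt M (\<lambda>\<omega>. G \<omega> = g \<and> T \<omega> = 0)) Y0
      = cexp M (evt M (\<lambda>\<omega>. G \<omega> = 0 \<and> T \<omega> = 1)) Y0 - cexp M (evt M (\<lambda>\<omega>. G \<omega> = 0 \<and> T \<omega> = 0)) Y0"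
    using A3 g by blast
  show ?thesis
    unfolding Y_T0 set_integral_stay_outcome[OF le0] set_integral_stay_outcome[OF order_refl] trend[symmetric]
    using A4[rule_format, OF g] by (simp add: algebra_simps)
qed

lemma did_identifies_late:
  assumes A3: "\<forall>g\<le>gbar. \<forall>g'\<le>gbar.
           cexp M (evt M (\<lambda>\<omega>. G \<omega> = g \<and> T \<omega> = 1)) Y0 - cexp M (evt M (\<lambda>\<omega>. G \<omega> = g \<and> T \<omega> = 0)) Y0
         = cexp M (evt M (\<lambda>\<omega>. G \<omega> = g' \<and> T \<omega> = 1)) Y0 - cexp M (evt M (\<lambda>\<omega>. G \<omega> = g' \<and> T \<omega> = 0)) Y0"
    and A4: "\<forall>g\<le>gbar.
           cexp M (evt M (\<lambda>\<omega>. G \<omega> = g \<and> T \<omega> = 1 \<and> D0 \<omega> = 1)) (\<lambda>\<omega>. Y1 \<omega> - Y0 \<omega>)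
         = cexp M (evt M (\<lambda>\<omega>. G \<omega> = g \<and> T \<omega> = 0 \<and> D0 \<omega> = 1)) (\<lambda>\<omega>. Y1 \<omega> - Y0 \<omega>)"
  shows "w10 M D Gs T * W_DID M D Gs T Y 1 0 + (1 - w10 M D Gs T) * W_DID M D Gs T Y (-1) 0
    = cexp M (evt M (\<lambda>\<omega>. D0 \<omega> \<noteq> D1 \<omega> \<and> T \<omega> = 1)) (\<lambda>\<omega>. Y1 \<omega> - Y0 \<omega>)"
proof (rule weighted_wald_eq_late)
  have PG: "0 < PG 1" "0 < PG (-1)" "0 < PG 0"
    using increasing_groups decreasing_groups PG0_pos by auto
  have Y_trend: "cexpGs M Gs T Y k 1 - cexpGs M Gs T Y k 0
      = (cexp M (evt M (\<lambda>\<omega>. G \<omega> = 0 \<and> T \<omega> = 1)) Y0 - cexp M (evt M (\<lambda>\<omega>. G \<omega> = 0 \<and> T \<omega> = 0)) Y0)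
        + of_int k * (LINT \<omega>:switchers k|M. Y1 \<omega> - Y0 \<omega>) / (Pt 1 * PG k)" if "0 < PG k" for k
    using that int_Y0 int_Y1 did_group_trend[OF A3 A4]
    by (intro trend_Gs_switchers set_integrable_of_integrable integrable_yobs abs_dobs_le_1) (auto simp: sign_groups_def)
  show "W_DID M D Gs T Y 1 0 = (LINT \<omega>:switchers 1|M. Y1 \<omega> - Y0 \<omega>) / prob (switchers 1)"
    "W_DID M D Gs T Y (-1) 0 = (LINT \<omega>:switchers (-1)|M. Y1 \<omega> - Y0 \<omega>) / prob (switchers (-1))"
    using PG prob_T_pos[of 1] prob_switchers_pos[of 1] prob_switchers_pos[of "-1"]
    by (simp_all add: W_DID_def DIDs_def Y_trend wald_denominator)
qed

subsection \<open>Time-corrected Wald ratio\<close>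

lemma prob_Gs_T_D0:
  "prob (evt M (\<lambda>\<omega>. Gs \<omega> = k \<and> T \<omega> = t \<and> D0 \<omega> = e)) = prob (evt M (\<lambda>\<omega>. Gs \<omega> = k \<and> D0 \<omega> = e)) * Pt t"
  by (simp add: prob_Gs_sum prob_G_T_D0 sum_distrib_right)

lemma stable_cell_outcome:
  assumes "Gs \<omega> = 0 \<longrightarrow> D0 \<omega> = D1 \<omega>" "Gs \<omega> = 0" "T \<omega> = t" "t \<le> 1"
  shows "D \<omega> = D0 \<omega>" "Y \<omega> = yobs D0 Y0 Y1 \<omega>"
  using assms by (auto simp: dobs_def yobs_def le_Suc_eq One_nat_def)

lemma AE_cell0_iff:
  assumes "t \<le> 1"
  shows "AE \<omega> in M. \<omega> \<in> evt M (\<lambda>\<omega>. Gs \<omega> = 0 \<and> T \<omega> = t \<and> D0 \<omega> = e) \<longleftrightarrow> \<omega> \<in> cell0 M D Gs T e t"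
  using AE_stable_no_switchers
proof eventually_elim
  case (elim \<omega>)
  then show ?case
    using stable_cell_outcome(1)[OF elim _ _ assms] by (auto simp: cell0_def evt_def)
qed

lemma AE_stable_cell_Y:
  assumes "t \<le> 1" "d \<le> 1"
  shows "AE \<omega> in M. \<omega> \<in> evt M (\<lambda>\<omega>. Gs \<omega> = 0 \<and> T \<omega> = t \<and> D0 \<omega> = real d) \<longrightarrow> Y \<omega> = Ypot d \<omega>"
  using AE_stable_no_switchers
proof eventually_elim
  case (elim \<omega>)
  then show ?case
    using stable_cell_outcome(2)[OF elim _ _ assms(1)] assms(2) by (auto simp: evt_def yobs_def le_Suc_eq One_nat_def)
qed

lemma sets_cell0 [measurable]: "cell0 M D Gs T e t \<in> sets M"
  unfolding cell0_def by (rule evt_in_sets) measurable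

lemma prob_cell0:
  assumes "t \<le> 1"
  shows "prob (cell0 M D Gs T e t) = prob (evt M (\<lambda>\<omega>. Gs \<omega> = 0 \<and> D0 \<omega> = e)) * Pt t"
proof -
  have "prob (cell0 M D Gs T e t) = prob (evt M (\<lambda>\<omega>. Gs \<omega> = 0 \<and> T \<omega> = t \<and> D0 \<omega> = e))"
    by (rule finite_measure_eq_AE[OF AE_cell0_iff[OF assms] _ sets_cell0, symmetric]) measurable
  then show ?thesis by (simp add: prob_Gs_T_D0)
qed

lemma set_integral_cell0_Y:
  assumes "t \<le> 1" "d \<le> 1"
  shows "(LINT \<omega>:cell0 M D Gs T (real d) t|M. Y \<omega>)
    = (\<Sum>g\<in>sign_groups 0. cexp M (evt M (\<lambda>\<omega>. G \<omega> = g \<and> T \<omega> = t \<and> D0 \<omega> = real d)) (Ypot d)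
        * prob (evt M (\<lambda>\<omega>. G \<omega> = g \<and> D0 \<omega> = real d))) * Pt t"
proof -
  let ?C = "evt M (\<lambda>\<omega>. Gs \<omega> = 0 \<and> T \<omega> = t \<and> D0 \<omega> = real d)"
  have [measurable]: "Ypot d \<in> borel_measurable M" by simp
  have int: "integrable M (Ypot d)" using int_Y0 int_Y1 by simp
  have "(LINT \<omega>:cell0 M D Gs T (real d) t|M. Y \<omega>) = (LINT \<omega>:?C|M. Y \<omega>)"
    unfolding cell0_def by (rule set_integral_cong_set[OF _ _ AE_cell0_iff[OF assms(1), unfolded cell0_def]])
      (unfold set_borel_measurable_def; measurable)+
  also have "\<dots> = (LINT \<omega>:?C|M. Ypot d \<omega>)"
    by (rule set_lebesgue_integral_cong_AE[OF _ _ _ AE_stable_cell_Y[OF assms]]) measurable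
  also have "\<dots> = (\<Sum>g\<in>sign_groups 0. LINT \<omega>:evt M (\<lambda>\<omega>. G \<omega> = g \<and> T \<omega> = t \<and> D0 \<omega> = real d)|M. Ypot d \<omega>)"
    by (rule set_integral_Gs_sum) (measurable, rule set_integrable_of_integrable[OF _ int], measurable)
  finally show ?thesis
    by (simp add: set_integral_G_T_D0_eq_cexp sum_distrib_right)
qed

lemma cexp_cell0_Y:
  assumes "t \<le> 1" "d \<le> 1"
  shows "cexp M (cell0 M D Gs T (real d) t) Y
    = (\<Sum>g\<in>sign_groups 0. cexp M (evt M (\<lambda>\<omega>. G \<omega> = g \<and> T \<omega> = t \<and> D0 \<omega> = real d)) (Ypot d)
        * prob (evt M (\<lambda>\<omega>. G \<omega> = g \<and> D0 \<omega> = real d))) / prob (evt M (\<lambda>\<omega>. Gs \<omega> = 0 \<and> D0 \<omega> = real d))"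
proof -
  have "cexp M (cell0 M D Gs T (real d) t) Y
      = (LINT \<omega>:cell0 M D Gs T (real d) t|M. Y \<omega>) / prob (cell0 M D Gs T (real d) t)"
    by (simp add: cexp_def set_lebesgue_integral_def)
  then show ?thesis
    using prob_T_pos[OF assms(1)] by (simp add: set_integral_cell0_Y[OF assms] prob_cell0[OF assms(1)])
qed

text \<open>On the stable cells the switchers are negligible, so \<delta>*_d averages the group trends of
  Y(d) given D(0) = d, which all coincide by Assumption 3'.\<close>

lemma deltas_eq:
  assumes A3': "\<forall>d\<in>{0::nat,1}. \<forall>g\<le>gbar. \<forall>g'\<le>gbar.
           0 < measure M (evt M (\<lambda>\<omega>. G \<omega> = g \<and> D0 \<omega> = real d)) \<longrightarrow>
           0 < measure M (evt M (\<lambda>\<omega>. G \<omega> = g' \<and> D0 \<omega> = real d)) \<longrightarrow>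
           cexp M (evt M (\<lambda>\<omega>. G \<omega> = g \<and> T \<omega> = 1 \<and> D0 \<omega> = real d)) (if d = 0 then Y0 else Y1)
             - cexp M (evt M (\<lambda>\<omega>. G \<omega> = g \<and> T \<omega> = 0 \<and> D0 \<omega> = real d)) (if d = 0 then Y0 else Y1)
         = cexp M (evt M (\<lambda>\<omega>. G \<omega> = g' \<and> T \<omega> = 1 \<and> D0 \<omega> = real d)) (if d = 0 then Y0 else Y1)
             - cexp M (evt M (\<lambda>\<omega>. G \<omega> = g' \<and> T \<omega> = 0 \<and> D0 \<omega> = real d)) (if d = 0 then Y0 else Y1)"
    and d: "d \<le> 1" and g: "g \<le> gbar"
    and pos: "0 < prob (evt M (\<lambda>\<omega>. Gs \<omega> = 0 \<and> D0 \<omega> = real d))" "0 < prob (evt M (\<lambda>\<omega>. G \<omega> = g \<and> D0 \<omega> = real d))"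
  shows "deltas M D Gs T Y (real d)
    = cexp M (evt M (\<lambda>\<omega>. G \<omega> = g \<and> T \<omega> = 1 \<and> D0 \<omega> = real d)) (Ypot d)
      - cexp M (evt M (\<lambda>\<omega>. G \<omega> = g \<and> T \<omega> = 0 \<and> D0 \<omega> = real d)) (Ypot d)"
proof -
  let ?c = "\<lambda>g t. cexp M (evt M (\<lambda>\<omega>. G \<omega> = g \<and> T \<omega> = t \<and> D0 \<omega> = real d)) (Ypot d)"
  let ?r = "\<lambda>g. prob (evt M (\<lambda>\<omega>. G \<omega> = g \<and> D0 \<omega> = real d))"
  define R where "R = prob (evt M (\<lambda>\<omega>. Gs \<omega> = 0 \<and> D0 \<omega> = real d))"
  have dd: "d \<in> {0, 1}" using d by (auto simp: le_Suc_eq One_nat_def)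
  have per_group: "(?c g' 1 - ?c g' 0) * ?r g' = (?c g 1 - ?c g 0) * ?r g'" if "g' \<in> sign_groups 0" for g'
  proof (cases "?r g' = 0")
    case False
    then have "0 < ?r g'" by (simp add: zero_less_measure_iff)
    then show ?thesis using A3'[rule_format, OF dd _ g _ pos(2)] that by (simp add: sign_groups_def)
  qed simp
  have "Measurable.pred M (\<lambda>\<omega>. D0 \<omega> = real d)" by measurable
  note R_sum = prob_Gs_sum[OF this, of 0]
  have "(\<Sum>g'\<in>sign_groups 0. ?c g' 1 * ?r g') - (\<Sum>g'\<in>sign_groups 0. ?c g' 0 * ?r g')
      = (\<Sum>g'\<in>sign_groups 0. (?c g' 1 - ?c g' 0) * ?r g')"
    by (simp only: sum_subtractf[symmetric] left_diff_distrib)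
  also have "\<dots> = (\<Sum>g'\<in>sign_groups 0. (?c g 1 - ?c g 0) * ?r g')"
    by (rule sum.cong[OF refl per_group])
  also have "\<dots> = (?c g 1 - ?c g 0) * R"
    by (simp only: R_def R_sum sum_distrib_left)
  finally have "(\<Sum>g'\<in>sign_groups 0. ?c g' 1 * ?r g') - (\<Sum>g'\<in>sign_groups 0. ?c g' 0 * ?r g') = (?c g 1 - ?c g 0) * R" .
  then show ?thesis
    using pos(1) unfolding deltas_def cell0_def[symmetric] cexp_cell0_Y[OF order_refl d] cexp_cell0_Y[OF le0 d]
    by (simp add: diff_divide_distrib[symmetric] R_def)
qed

lemma tc_cell_trend:
  assumes A3': "\<forall>d\<in>{0::nat,1}. \<forall>g\<le>gbar. \<forall>g'\<le>gbar.
           0 < measure M (evt M (\<lambda>\<omega>. G \<omega> = g \<and> D0 \<omega> = real d)) \<longrightarrow>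
           0 < measure M (evt M (\<lambda>\<omega>. G \<omega> = g' \<and> D0 \<omega> = real d)) \<longrightarrow>
           cexp M (evt M (\<lambda>\<omega>. G \<omega> = g \<and> T \<omega> = 1 \<and> D0 \<omega> = real d)) (if d = 0 then Y0 else Y1)
             - cexp M (evt M (\<lambda>\<omega>. G \<omega> = g \<and> T \<omega> = 0 \<and> D0 \<omega> = real d)) (if d = 0 then Y0 else Y1)
         = cexp M (evt M (\<lambda>\<omega>. G \<omega> = g' \<and> T \<omega> = 1 \<and> D0 \<omega> = real d)) (if d = 0 then Y0 else Y1)
             - cexp M (evt M (\<lambda>\<omega>. G \<omega> = g' \<and> T \<omega> = 0 \<and> D0 \<omega> = real d)) (if d = 0 then Y0 else Y1)"
    and cells: "\<forall>d\<in>{0,1}. \<forall>t\<le>1. 0 < measure M (cell0 M D Gs T d t)"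
    and d: "d \<le> 1" and g: "g \<le> gbar"
  shows "(LINT \<omega>:evt M (\<lambda>\<omega>. G \<omega> = g \<and> T \<omega> = 0 \<and> D0 \<omega> = real d)|M. Y \<omega> + deltas M D Gs T Y (D \<omega>)) / Pt 0
    = (LINT \<omega>:evt M (\<lambda>\<omega>. G \<omega> = g \<and> T \<omega> = 1 \<and> D0 \<omega> = real d)|M. Ypot d \<omega>) / Pt 1"
proof (cases "prob (evt M (\<lambda>\<omega>. G \<omega> = g \<and> D0 \<omega> = real d)) = 0")
  case True
  then show ?thesis by (simp add: set_integral_G_T_D0_eq_cexp)
next
  case False
  let ?C = "\<lambda>t. evt M (\<lambda>\<omega>. G \<omega> = g \<and> T \<omega> = t \<and> D0 \<omega> = real d)"
  let ?\<delta> = "deltas M D Gs T Y (real d)"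
  have dd: "real d \<in> {0, 1}" using d by (auto simp: le_Suc_eq One_nat_def)
  have "0 < prob (cell0 M D Gs T (real d) 1)"
    using cells dd by blast
  then have "0 < prob (evt M (\<lambda>\<omega>. Gs \<omega> = 0 \<and> D0 \<omega> = real d)) * Pt 1"
    by (simp add: prob_cell0)
  then have R: "0 < prob (evt M (\<lambda>\<omega>. Gs \<omega> = 0 \<and> D0 \<omega> = real d))"
    using prob_T_pos[of 1] by (simp add: zero_less_mult_iff)
  have "(LINT \<omega>:?C 0|M. Y \<omega> + deltas M D Gs T Y (D \<omega>)) = (LINT \<omega>:?C 0|M. Ypot d \<omega> + ?\<delta>)"
    using d by (intro set_lebesgue_integral_cong) (auto simp: evt_def yobs_def dobs_def le_Suc_eq One_nat_def)
  also have "\<dots> = (LINT \<omega>:?C 0|M. Ypot d \<omega>) + ?\<delta> * prob (?C 0)"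
  proof -
    have "integrable M (Ypot d)" using int_Y0 int_Y1 by simp
    then have "set_integrable M (?C 0) (Ypot d)" by (rule set_integrable_of_integrable[rotated]) measurable
    moreover have "set_integrable M (?C 0) (\<lambda>_. ?\<delta>)" by (rule set_integrable_of_integrable) simp_all
    ultimately show ?thesis by (simp add: set_integral_add set_integral_const_prob)
  qed
  also have "\<dots> = (cexp M (?C 0) (Ypot d) + ?\<delta>) * prob (evt M (\<lambda>\<omega>. G \<omega> = g \<and> D0 \<omega> = real d)) * Pt 0"
    by (simp only: set_integral_G_T_D0_eq_cexp prob_G_T_D0 algebra_simps)
  finally show ?thesis
    using prob_T_pos[of 0] prob_T_pos[of 1] deltas_eq[OF A3' d g R] False
    by (simp add: set_integral_G_T_D0_eq_cexp zero_less_measure_iff)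
qed

lemma tc_identifies_late:
  assumes cells: "\<forall>d\<in>{0,1}. \<forall>t\<le>1. 0 < measure M (cell0 M D Gs T d t)"
    and A3': "\<forall>d\<in>{0::nat,1}. \<forall>g\<le>gbar. \<forall>g'\<le>gbar.
           0 < measure M (evt M (\<lambda>\<omega>. G \<omega> = g \<and> D0 \<omega> = real d)) \<longrightarrow>
           0 < measure M (evt M (\<lambda>\<omega>. G \<omega> = g' \<and> D0 \<omega> = real d)) \<longrightarrow>
           cexp M (evt M (\<lambda>\<omega>. G \<omega> = g \<and> T \<omega> = 1 \<and> D0 \<omega> = real d)) (if d = 0 then Y0 else Y1)
             - cexp M (evt M (\<lambda>\<omega>. G \<omega> = g \<and> T \<omega> = 0 \<and> D0 \<omega> = real d)) (if d = 0 then Y0 else Y1)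
         = cexp M (evt M (\<lambda>\<omega>. G \<omega> = g' \<and> T \<omega> = 1 \<and> D0 \<omega> = real d)) (if d = 0 then Y0 else Y1)
             - cexp M (evt M (\<lambda>\<omega>. G \<omega> = g' \<and> T \<omega> = 0 \<and> D0 \<omega> = real d)) (if d = 0 then Y0 else Y1)"
  shows "w10 M D Gs T * W_TC M D Gs T Y 1 + (1 - w10 M D Gs T) * W_TC M D Gs T Y (-1)
    = cexp M (evt M (\<lambda>\<omega>. D0 \<omega> \<noteq> D1 \<omega> \<and> T \<omega> = 1)) (\<lambda>\<omega>. Y1 \<omega> - Y0 \<omega>)"
proof (rule weighted_wald_eq_late)
  let ?Z = "\<lambda>\<omega>. Y \<omega> + deltas M D Gs T Y (D \<omega>)"
  have PG: "0 < PG 1" "0 < PG (-1)"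
    using increasing_groups decreasing_groups by auto
  have "integrable M ?Z"
  proof -
    let ?\<delta> = "deltas M D Gs T Y"
    have "integrable M (\<lambda>\<omega>. D \<omega> * (?\<delta> 1 - ?\<delta> 0))"
      by (rule integrable_bounded_mult[where X="\<lambda>_. ?\<delta> 1 - ?\<delta> 0"]) (simp_all add: abs_dobs_le_1)
    moreover have "integrable M Y"
      by (rule integrable_yobs[OF int_Y0 int_Y1 _ abs_dobs_le_1]) measurable
    ultimately have "integrable M (\<lambda>\<omega>. Y \<omega> + (?\<delta> 0 + D \<omega> * (?\<delta> 1 - ?\<delta> 0)))"
      by simp
    then show ?thesis
      by (rule iffD1[OF Bochner_Integration.integrable_cong[OF refl], rotated]) (auto simp: dobs_def treat_def)
  qed
  then have Z: "set_integrable M (evt M (\<lambda>\<omega>. T \<omega> = 0)) ?Z"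
    by (intro set_integrable_of_integrable) measurable
  have trend: "cexpGs M Gs T Y k 1 - cexpGs M Gs T ?Z k 0 = 0 + of_int k * (LINT \<omega>:switchers k|M. Y1 \<omega> - Y0 \<omega>) / (Pt 1 * PG k)"
    if "0 < PG k" for k
    using that int_Y0 int_Y1 Z
  proof (rule trend_Gs_switchers)
    fix g assume "g \<in> sign_groups k"
    then show "(LINT \<omega>:evt M (\<lambda>\<omega>. G \<omega> = g \<and> T \<omega> = 0)|M. ?Z \<omega>) / Pt 0
        = (LINT \<omega>:evt M (\<lambda>\<omega>. G \<omega> = g \<and> T \<omega> = 1)|M. yobs D0 Y0 Y1 \<omega>) / Pt 1 - 0 * prob (evt M (\<lambda>\<omega>. G \<omega> = g))"
      using trend_from_D0_cells[OF Z tc_cell_trend[OF A3' cells]] by (simp add: sign_groups_def)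
  qed
  show "W_TC M D Gs T Y 1 = (LINT \<omega>:switchers 1|M. Y1 \<omega> - Y0 \<omega>) / prob (switchers 1)"
    "W_TC M D Gs T Y (-1) = (LINT \<omega>:switchers (-1)|M. Y1 \<omega> - Y0 \<omega>) / prob (switchers (-1))"
    using PG prob_T_pos[of 1] prob_switchers_pos[of 1] prob_switchers_pos[of "-1"]
    by (simp_all add: W_TC_def trend wald_denominator)
qed

end

section \<open>Changes-in-changes Wald ratio\<close>

locale fuzzy_did_cic = fuzzy_did +
  fixes U :: "nat \<Rightarrow> 'a \<Rightarrow> real" and h :: "nat \<Rightarrow> real \<Rightarrow> nat \<Rightarrow> real"
  assumes stable_cells_pos: "\<forall>d\<in>{0,1}. \<forall>t\<le>1. 0 < measure M (cell0 M (dobs v V G T) (gstar M (dobs v V G T) G T) T d t)"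
    and integrable_Q: "integrable M (\<lambda>\<omega>. indicator (evt M (\<lambda>\<omega>. T \<omega> = 0)) \<omega>
      * Qs M (dobs v V G T) (gstar M (dobs v V G T) G T) T (yobs (dobs v V G T) Y0 Y1) (dobs v V G T \<omega>) (yobs (dobs v V G T) Y0 Y1 \<omega>))"
    and meas_U: "\<forall>d\<le>1. U d \<in> borel_measurable M"
    and outcome_model: "\<forall>d\<le>1. \<forall>\<omega>\<in>space M. (if d = 0 then Y0 \<omega> else Y1 \<omega>) = h d (U d \<omega>) (T \<omega>)"
    and h_strict_mono: "\<forall>d\<le>1. \<forall>t\<le>1. strict_mono (\<lambda>u. h d u t)"
    and U_indep_T: "\<forall>d\<le>1. \<forall>B\<in>sets borel. \<forall>g t e.
           measure M (evt M (\<lambda>\<omega>. U d \<omega> \<in> B \<and> T \<omega> = t \<and> G \<omega> = g \<and> treat v V G 0 \<omega> = e))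
             * measure M (evt M (\<lambda>\<omega>. G \<omega> = g \<and> treat v V G 0 \<omega> = e))
         = measure M (evt M (\<lambda>\<omega>. U d \<omega> \<in> B \<and> G \<omega> = g \<and> treat v V G 0 \<omega> = e))
             * measure M (evt M (\<lambda>\<omega>. T \<omega> = t \<and> G \<omega> = g \<and> treat v V G 0 \<omega> = e))"
    and support_interval: "is_interval (csupp M (space M) (yobs (dobs v V G T) Y0 Y1))"
    and cell_cdfs: "\<forall>d\<in>{0,1}. \<forall>g\<le>gbar. \<forall>t\<le>1.
           0 < measure M (evt M (\<lambda>\<omega>. dobs v V G T \<omega> = d \<and> G \<omega> = g \<and> T \<omega> = t)) \<longrightarrow>
             continuous_on UNIV (ccdf M (evt M (\<lambda>\<omega>. dobs v V G T \<omega> = d \<and> G \<omega> = g \<and> T \<omega> = t)) (yobs (dobs v V G T) Y0 Y1))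
           \<and> strict_mono_on (csupp M (space M) (yobs (dobs v V G T) Y0 Y1))
               (ccdf M (evt M (\<lambda>\<omega>. dobs v V G T \<omega> = d \<and> G \<omega> = g \<and> T \<omega> = t)) (yobs (dobs v V G T) Y0 Y1))"
begin

abbreviation "S \<equiv> csupp M (space M) Y"
abbreviation "F t d \<equiv> ccdf M (cell0 M D Gs T (real d) t) Y"

lemma measurable_U: "d \<le> 1 \<Longrightarrow> U d \<in> borel_measurable M"
  using meas_U by blast

lemma h_less_eq_iff: "d \<le> 1 \<Longrightarrow> t \<le> 1 \<Longrightarrow> h d a t \<le> h d b t \<longleftrightarrow> a \<le> b"
  using h_strict_mono strict_mono_less_eq[of "\<lambda>u. h d u t"] by blast

lemma prob_U_T:
  assumes "d \<le> 1" "B \<in> sets borel"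
  shows "prob (evt M (\<lambda>\<omega>. G \<omega> = g \<and> T \<omega> = t \<and> D0 \<omega> = e \<and> U d \<omega> \<in> B))
    = prob (evt M (\<lambda>\<omega>. G \<omega> = g \<and> D0 \<omega> = e \<and> U d \<omega> \<in> B)) * Pt t"
proof (cases "prob (evt M (\<lambda>\<omega>. G \<omega> = g \<and> D0 \<omega> = e)) = 0")
  case True
  have [measurable]: "U d \<in> borel_measurable M" using assms(1) by (rule measurable_U)
  have sets: "evt M (\<lambda>\<omega>. G \<omega> = g \<and> D0 \<omega> = e) \<in> sets M" by measurable
  have "prob (evt M (\<lambda>\<omega>. G \<omega> = g \<and> T \<omega> = t \<and> D0 \<omega> = e \<and> U d \<omega> \<in> B)) \<le> prob (evt M (\<lambda>\<omega>. G \<omega> = g \<and> D0 \<omega> = e))"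
    "prob (evt M (\<lambda>\<omega>. G \<omega> = g \<and> D0 \<omega> = e \<and> U d \<omega> \<in> B)) \<le> prob (evt M (\<lambda>\<omega>. G \<omega> = g \<and> D0 \<omega> = e))"
    by (rule finite_measure_mono[OF _ sets]; auto simp: evt_def)
      (rule finite_measure_mono[OF _ sets]; auto simp: evt_def)
  then have "prob (evt M (\<lambda>\<omega>. G \<omega> = g \<and> T \<omega> = t \<and> D0 \<omega> = e \<and> U d \<omega> \<in> B)) \<le> 0"
    "prob (evt M (\<lambda>\<omega>. G \<omega> = g \<and> D0 \<omega> = e \<and> U d \<omega> \<in> B)) \<le> 0"
    using True by simp_all
  then show ?thesis by (simp add: measure_le_0_iff)
next
  case False
  have evts: "evt M (\<lambda>\<omega>. U d \<omega> \<in> B \<and> T \<omega> = t \<and> G \<omega> = g \<and> D0 \<omega> = e) = evt M (\<lambda>\<omega>. G \<omega> = g \<and> T \<omega> = t \<and> D0 \<omega> = e \<and> U d \<omega> \<in> B)"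
    "evt M (\<lambda>\<omega>. U d \<omega> \<in> B \<and> G \<omega> = g \<and> D0 \<omega> = e) = evt M (\<lambda>\<omega>. G \<omega> = g \<and> D0 \<omega> = e \<and> U d \<omega> \<in> B)"
    "evt M (\<lambda>\<omega>. T \<omega> = t \<and> G \<omega> = g \<and> D0 \<omega> = e) = evt M (\<lambda>\<omega>. G \<omega> = g \<and> T \<omega> = t \<and> D0 \<omega> = e)"
    by (auto simp: evt_def)
  have "prob (evt M (\<lambda>\<omega>. G \<omega> = g \<and> T \<omega> = t \<and> D0 \<omega> = e \<and> U d \<omega> \<in> B)) * prob (evt M (\<lambda>\<omega>. G \<omega> = g \<and> D0 \<omega> = e))
      = (prob (evt M (\<lambda>\<omega>. G \<omega> = g \<and> D0 \<omega> = e \<and> U d \<omega> \<in> B)) * Pt t) * prob (evt M (\<lambda>\<omega>. G \<omega> = g \<and> D0 \<omega> = e))"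
    using U_indep_T[rule_format, OF assms, of t g e] unfolding evts prob_G_T_D0 by (simp only: mult_ac)
  then show ?thesis using False by simp
qed

lemma prob_U_stable_T:
  assumes "d \<le> 1" "B \<in> sets borel"
  shows "prob (evt M (\<lambda>\<omega>. Gs \<omega> = 0 \<and> T \<omega> = t \<and> D0 \<omega> = e \<and> U d \<omega> \<in> B))
    = prob (evt M (\<lambda>\<omega>. Gs \<omega> = 0 \<and> D0 \<omega> = e \<and> U d \<omega> \<in> B)) * Pt t"
proof -
  have [measurable]: "U d \<in> borel_measurable M" using assms(1) by (rule measurable_U)
  have [measurable]: "Measurable.pred M (\<lambda>\<omega>. U d \<omega> \<in> B)" using assms(2) by measurable
  show ?thesis by (simp add: prob_Gs_sum prob_U_T[OF assms] sum_distrib_right)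
qed

definition Ucdf :: "nat \<Rightarrow> real \<Rightarrow> real" where
  "Ucdf d u = prob (evt M (\<lambda>\<omega>. Gs \<omega> = 0 \<and> D0 \<omega> = real d \<and> U d \<omega> \<le> u)) / prob (evt M (\<lambda>\<omega>. Gs \<omega> = 0 \<and> D0 \<omega> = real d))"

lemma F_h_eq_Ucdf:
  assumes d: "d \<le> 1" and t: "t \<le> 1"
  shows "F t d (h d u t) = Ucdf d u"
proof -
  let ?C = "cell0 M D Gs T (real d) t"
  have [measurable]: "U d \<in> borel_measurable M" using d by (rule measurable_U)
  have "AE \<omega> in M. \<omega> \<in> {\<omega> \<in> ?C. Y \<omega> \<le> h d u t}
      \<longleftrightarrow> \<omega> \<in> evt M (\<lambda>\<omega>. Gs \<omega> = 0 \<and> T \<omega> = t \<and> D0 \<omega> = real d \<and> U d \<omega> \<le> u)"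
    using AE_cell0_iff[OF t, of "real d"] AE_stable_cell_Y[OF t d] AE_space
  proof eventually_elim
    case (elim \<omega>)
    show ?case
    proof (cases "\<omega> \<in> evt M (\<lambda>\<omega>. Gs \<omega> = 0 \<and> T \<omega> = t \<and> D0 \<omega> = real d)")
      case True
      then have "Y \<omega> = h d (U d \<omega>) t" using elim outcome_model d by (auto simp: evt_def)
      then have "Y \<omega> \<le> h d u t \<longleftrightarrow> U d \<omega> \<le> u" using h_less_eq_iff[OF d t] by simp
      then show ?thesis using elim(1) True by (simp add: evt_def)
    next
      case False
      then show ?thesis using elim by (auto simp: evt_def)
    qed
  qed
  moreover have "{\<omega> \<in> ?C. Y \<omega> \<le> h d u t} \<in> sets M"
    by (rule sets_restrict_pred[OF sets_cell0]) measurable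
  moreover have "evt M (\<lambda>\<omega>. Gs \<omega> = 0 \<and> T \<omega> = t \<and> D0 \<omega> = real d \<and> U d \<omega> \<le> u) \<in> sets M"
    by measurable
  ultimately have "prob {\<omega> \<in> ?C. Y \<omega> \<le> h d u t} = prob (evt M (\<lambda>\<omega>. Gs \<omega> = 0 \<and> T \<omega> = t \<and> D0 \<omega> = real d \<and> U d \<omega> \<le> u))"
    by (rule finite_measure_eq_AE)
  then show ?thesis
    using prob_T_pos[OF t] prob_U_stable_T[OF d, of "{..u}" t "real d"]
    by (simp add: ccdf_def Ucdf_def prob_cell0[OF t])
qed

lemma stable_cell_exists:
  assumes d: "d \<le> 1" and t: "t \<le> 1"
  obtains g where "g \<in> sign_groups 0" "0 < prob (evt M (\<lambda>\<omega>. D \<omega> = real d \<and> G \<omega> = g \<and> T \<omega> = t))"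
proof -
  have "real d \<in> {0, 1}" using d by (auto simp: le_Suc_eq One_nat_def)
  then have "0 < prob (cell0 M D Gs T (real d) t)" using stable_cells_pos t by blast
  also have "cell0 M D Gs T (real d) t = evt M (\<lambda>\<omega>. Gs \<omega> = 0 \<and> D \<omega> = real d \<and> T \<omega> = t)"
    by (auto simp: cell0_def evt_def)
  finally have "0 < (\<Sum>g\<in>sign_groups 0. prob (evt M (\<lambda>\<omega>. G \<omega> = g \<and> D \<omega> = real d \<and> T \<omega> = t)))"
    by (simp add: prob_Gs_sum)
  then obtain g where "g \<in> sign_groups 0" "0 < prob (evt M (\<lambda>\<omega>. G \<omega> = g \<and> D \<omega> = real d \<and> T \<omega> = t))"
    by (metis (no_types, lifting) not_le sum_nonpos)
  moreover have "evt M (\<lambda>\<omega>. G \<omega> = g \<and> D \<omega> = real d \<and> T \<omega> = t) = evt M (\<lambda>\<omega>. D \<omega> = real d \<and> G \<omega> = g \<and> T \<omega> = t)"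
    by (auto simp: evt_def)
  ultimately show thesis using that by simp
qed

lemma F_strict_mono:
  assumes d: "d \<le> 1" and t: "t \<le> 1"
  shows "strict_mono_on S (F t d)"
proof -
  obtain g where g: "g \<in> sign_groups 0" and pos: "0 < prob (evt M (\<lambda>\<omega>. D \<omega> = real d \<and> G \<omega> = g \<and> T \<omega> = t))"
    using stable_cell_exists[OF d t] .
  have "real d \<in> {0, 1}" "g \<le> gbar" using d g by (auto simp: le_Suc_eq One_nat_def sign_groups_def)
  then have "strict_mono_on S (ccdf M (evt M (\<lambda>\<omega>. D \<omega> = real d \<and> G \<omega> = g \<and> T \<omega> = t)) Y)"
    using cell_cdfs t pos by blast
  moreover have "real d \<in> {0, 1}" using d by (auto simp: le_Suc_eq One_nat_def)
  then have "0 < prob (cell0 M D Gs T (real d) t)" using stable_cells_pos t by blast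
  moreover have "evt M (\<lambda>\<omega>. D \<omega> = real d \<and> G \<omega> = g \<and> T \<omega> = t) \<subseteq> cell0 M D Gs T (real d) t"
    using g by (auto simp: evt_def cell0_def sign_groups_def Gs_eq)
  ultimately show ?thesis
    by (intro ccdf_strict_mono_on_superset[OF sets_cell0 _ _ pos]) measurable
qed

lemma AE_in_support: "AE \<omega> in M. Y \<omega> \<in> S"
  using AE_in_csupp[of Y "space M"] by (simp add: AE_space)

lemma qinv_F_Ucdf:
  assumes d: "d \<le> 1" and q: "0 < Ucdf d u" "Ucdf d u < 1"
  shows "qinv (F 1 d) (Ucdf d u) = h d u 1"
proof -
  have "real d \<in> {0, 1}" using d by (auto simp: le_Suc_eq One_nat_def)
  then have "0 < prob (cell0 M D Gs T (real d) 1)" using stable_cells_pos by blast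
  moreover have "Y \<in> borel_measurable M" by measurable
  ultimately show ?thesis
    using qinv_ccdf_cancel[OF sets_cell0 _ _ AE_in_support support_interval F_strict_mono[OF d order_refl], of "h d u 1"] q
    unfolding F_h_eq_Ucdf[OF d order_refl] by simp
qed

lemma F_le_1: "F t d y \<le> 1"
  by (intro ccdf_le_1 sets_cell0 sets_restrict_pred) measurable

lemma cell_no_atom:
  assumes d: "d \<le> 1" and g: "g \<le> gbar" and pos: "0 < prob (evt M (\<lambda>\<omega>. G \<omega> = g \<and> T \<omega> = 0 \<and> D0 \<omega> = real d))"
  shows "{\<omega> \<in> evt M (\<lambda>\<omega>. G \<omega> = g \<and> T \<omega> = 0 \<and> D0 \<omega> = real d). Y \<omega> = a} \<in> null_sets M"
proof -
  let ?C = "evt M (\<lambda>\<omega>. G \<omega> = g \<and> T \<omega> = 0 \<and> D0 \<omega> = real d)"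
  have "?C = evt M (\<lambda>\<omega>. D \<omega> = real d \<and> G \<omega> = g \<and> T \<omega> = 0)"
    by (auto simp: evt_def dobs_def)
  moreover have "real d \<in> {0, 1}" using d by (auto simp: le_Suc_eq One_nat_def)
  ultimately have cont: "continuous_on UNIV (ccdf M ?C Y)"
    using cell_cdfs g pos by auto
  have "{\<omega> \<in> ?C. Y \<omega> = a} \<in> sets M" by (intro sets_restrict_pred) measurable
  moreover have "prob {\<omega> \<in> ?C. Y \<omega> = a} = 0"
    by (rule continuous_ccdf_imp_no_atom[OF _ _ pos cont]) measurable
  ultimately show ?thesis by (simp add: null_sets_def emeasure_eq_measure)
qed

text \<open>Exceptions are Y outside the support, or F*_{d,0}(Y) \<in> {0, 1}; the latter happens at two
  points at most, each of which is an atom of zero mass by continuity.\<close>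

lemma AE_Qs_eq:
  assumes d: "d \<le> 1" and g: "g \<le> gbar" and pos: "0 < prob (evt M (\<lambda>\<omega>. G \<omega> = g \<and> T \<omega> = 0 \<and> D0 \<omega> = real d))"
  shows "AE \<omega> in M. \<omega> \<in> evt M (\<lambda>\<omega>. G \<omega> = g \<and> T \<omega> = 0 \<and> D0 \<omega> = real d)
    \<longrightarrow> Qs M D Gs T Y (D \<omega>) (Y \<omega>) = h d (U d \<omega>) 1"
proof -
  let ?C = "evt M (\<lambda>\<omega>. G \<omega> = g \<and> T \<omega> = 0 \<and> D0 \<omega> = real d)"
  obtain a0 a1 where extremes: "\<And>y. y \<in> S \<Longrightarrow> F 0 d y \<le> 0 \<or> 1 \<le> F 0 d y \<Longrightarrow> y = a0 \<or> y = a1"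
    using strict_mono_on_bounded_extremes[OF F_strict_mono[OF d le0] ccdf_nonneg F_le_1] by blast
  have "{\<omega> \<in> ?C. Y \<omega> = a} \<in> null_sets M" for a
    using cell_no_atom[OF d g pos] .
  then have "AE \<omega> in M. \<omega> \<notin> {\<omega> \<in> ?C. Y \<omega> = a0} \<and> \<omega> \<notin> {\<omega> \<in> ?C. Y \<omega> = a1}"
    by (intro AE_conjI AE_not_in)
  with AE_in_support AE_space show ?thesis
  proof eventually_elim
    case (elim \<omega>)
    note in_S = elim(1) and in_space = elim(2) and not_atom = elim(3)
    show ?case
    proof
      assume "\<omega> \<in> ?C"
      then have cell: "G \<omega> = g" "T \<omega> = 0" "D0 \<omega> = real d" by (auto simp: evt_def)
      have "Y \<omega> = Ypot d \<omega>"
        using cell d by (auto simp: yobs_def dobs_def le_Suc_eq One_nat_def)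
      also have "\<dots> = h d (U d \<omega>) 0"
        using outcome_model d in_space cell(2) by auto
      finally have "Y \<omega> = h d (U d \<omega>) 0" .
      then have F0: "F 0 d (Y \<omega>) = Ucdf d (U d \<omega>)"
        using F_h_eq_Ucdf[OF d le0] by simp
      have "Y \<omega> \<noteq> a0" "Y \<omega> \<noteq> a1" using not_atom \<open>\<omega> \<in> ?C\<close> by auto
      then have "0 < Ucdf d (U d \<omega>)" "Ucdf d (U d \<omega>) < 1"
        using extremes[OF in_S] F0 by force+
      moreover have "D \<omega> = real d" using cell by (simp add: dobs_def)
      ultimately show "Qs M D Gs T Y (D \<omega>) (Y \<omega>) = h d (U d \<omega>) 1"
        using qinv_F_Ucdf[OF d] F0 by (simp add: Qs_def)
    qed
  qed
qed

lemma borel_measurable_h: "d \<le> 1 \<Longrightarrow> t \<le> 1 \<Longrightarrow> (\<lambda>u. h d u t) \<in> borel_measurable borel"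
  using h_strict_mono by (intro borel_measurable_mono strict_mono_mono) auto

lemma set_integral_Qs_cell:
  assumes d: "d \<le> 1" and g: "g \<le> gbar" and pos: "0 < prob (evt M (\<lambda>\<omega>. G \<omega> = g \<and> T \<omega> = 0 \<and> D0 \<omega> = real d))"
  shows "(LINT \<omega>:evt M (\<lambda>\<omega>. G \<omega> = g \<and> T \<omega> = 0 \<and> D0 \<omega> = real d)|M. Qs M D Gs T Y (D \<omega>) (Y \<omega>))
    = (LINT \<omega>:evt M (\<lambda>\<omega>. G \<omega> = g \<and> T \<omega> = 0 \<and> D0 \<omega> = real d)|M. h d (U d \<omega>) 1)"
proof -
  let ?C = "evt M (\<lambda>\<omega>. G \<omega> = g \<and> T \<omega> = 0 \<and> D0 \<omega> = real d)"
  have [measurable]: "(\<lambda>\<omega>. h d (U d \<omega>) 1) \<in> borel_measurable M"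
    using measurable_compose[OF measurable_U[OF d] borel_measurable_h[OF d order_refl]] by simp
  have "set_integrable M ?C (\<lambda>\<omega>. Qs M D Gs T Y (D \<omega>) (Y \<omega>))"
  proof (rule set_integrable_subset)
    show "set_integrable M (evt M (\<lambda>\<omega>. T \<omega> = 0)) (\<lambda>\<omega>. Qs M D Gs T Y (D \<omega>) (Y \<omega>))"
      using integrable_Q by (simp add: set_integrable_def)
    show "?C \<subseteq> evt M (\<lambda>\<omega>. T \<omega> = 0)" by (auto simp: evt_def)
  qed measurable
  then have int: "integrable M (\<lambda>\<omega>. indicator ?C \<omega> * Qs M D Gs T Y (D \<omega>) (Y \<omega>))"
    by (simp add: set_integrable_def)
  have ae: "AE \<omega> in M. indicator ?C \<omega> * Qs M D Gs T Y (D \<omega>) (Y \<omega>) = indicator ?C \<omega> * h d (U d \<omega>) 1"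
    using AE_Qs_eq[OF d g pos] by (rule eventually_mono) (simp add: indicator_def)
  show ?thesis
    unfolding set_lebesgue_integral_def real_scaleR_def
    by (rule integral_cong_AE[OF borel_measurable_integrable[OF int] _ ae]) measurable
qed

text \<open>Q*_d maps h_d(u, 0) to h_d(u, 1), and U_d has the same law among the period-0 and the
  period-1 units of a cell.\<close>

lemma cic_cell_trend:
  assumes d: "d \<le> 1" and g: "g \<le> gbar"
  shows "(LINT \<omega>:evt M (\<lambda>\<omega>. G \<omega> = g \<and> T \<omega> = 0 \<and> D0 \<omega> = real d)|M. Qs M D Gs T Y (D \<omega>) (Y \<omega>)) / Pt 0
    = (LINT \<omega>:evt M (\<lambda>\<omega>. G \<omega> = g \<and> T \<omega> = 1 \<and> D0 \<omega> = real d)|M. Ypot d \<omega>) / Pt 1"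
proof (cases "prob (evt M (\<lambda>\<omega>. G \<omega> = g \<and> D0 \<omega> = real d)) = 0")
  case True
  then show ?thesis by (simp add: set_integral_G_T_D0_eq_cexp)
next
  case False
  let ?C = "\<lambda>t. evt M (\<lambda>\<omega>. G \<omega> = g \<and> T \<omega> = t \<and> D0 \<omega> = real d)"
  have [measurable]: "U d \<in> borel_measurable M" using d by (rule measurable_U)
  have "0 < prob (?C 0)"
    using False prob_T_pos[of 0] by (simp add: prob_G_T_D0 zero_less_measure_iff)
  then have "(LINT \<omega>:?C 0|M. Qs M D Gs T Y (D \<omega>) (Y \<omega>)) = (LINT \<omega>:?C 0|M. h d (U d \<omega>) 1)"
    by (rule set_integral_Qs_cell[OF d g])
  also have "\<dots> = Pt 0 / Pt 1 * (LINT \<omega>:?C 1|M. h d (U d \<omega>) 1)"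
  proof (rule set_integral_comp_if_law_proportional[OF _ _ measurable_U[OF d] _ _ borel_measurable_h[OF d order_refl]])
    fix B :: "real set" assume "B \<in> sets borel"
    moreover have "?C t \<inter> (U d -` B \<inter> space M) = evt M (\<lambda>\<omega>. G \<omega> = g \<and> T \<omega> = t \<and> D0 \<omega> = real d \<and> U d \<omega> \<in> B)" for t
      by (auto simp: evt_def)
    ultimately show "prob (?C 0 \<inter> (U d -` B \<inter> space M)) = Pt 0 / Pt 1 * prob (?C 1 \<inter> (U d -` B \<inter> space M))"
      using prob_T_pos[of 1] by (simp add: prob_U_T[OF d])
  next
    show "0 \<le> Pt 0 / Pt 1" by simp
  qed measurable
  also have "(LINT \<omega>:?C 1|M. h d (U d \<omega>) 1) = (LINT \<omega>:?C 1|M. Ypot d \<omega>)"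
    by (rule set_lebesgue_integral_cong) (measurable, use outcome_model d in \<open>auto simp: evt_def\<close>)
  finally show ?thesis using prob_T_pos[of 0] prob_T_pos[of 1] by simp
qed

lemma cic_identifies_late:
  "w10 M D Gs T * W_CIC M D Gs T Y 1 + (1 - w10 M D Gs T) * W_CIC M D Gs T Y (-1)
    = cexp M (evt M (\<lambda>\<omega>. D0 \<omega> \<noteq> D1 \<omega> \<and> T \<omega> = 1)) (\<lambda>\<omega>. Y1 \<omega> - Y0 \<omega>)"
proof (rule weighted_wald_eq_late)
  let ?Z = "\<lambda>\<omega>. Qs M D Gs T Y (D \<omega>) (Y \<omega>)"
  have PG: "0 < PG 1" "0 < PG (-1)"
    using increasing_groups decreasing_groups by auto
  have Z: "set_integrable M (evt M (\<lambda>\<omega>. T \<omega> = 0)) ?Z"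
    using integrable_Q by (simp add: set_integrable_def)
  have trend: "cexpGs M Gs T Y k 1 - cexpGs M Gs T ?Z k 0 = 0 + of_int k * (LINT \<omega>:switchers k|M. Y1 \<omega> - Y0 \<omega>) / (Pt 1 * PG k)"
    if "0 < PG k" for k
    using that int_Y0 int_Y1 Z
  proof (rule trend_Gs_switchers)
    fix g assume "g \<in> sign_groups k"
    then show "(LINT \<omega>:evt M (\<lambda>\<omega>. G \<omega> = g \<and> T \<omega> = 0)|M. ?Z \<omega>) / Pt 0
        = (LINT \<omega>:evt M (\<lambda>\<omega>. G \<omega> = g \<and> T \<omega> = 1)|M. yobs D0 Y0 Y1 \<omega>) / Pt 1 - 0 * prob (evt M (\<lambda>\<omega>. G \<omega> = g))"
      using trend_from_D0_cells[OF Z cic_cell_trend] by (simp add: sign_groups_def)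
  qed
  show "W_CIC M D Gs T Y 1 = (LINT \<omega>:switchers 1|M. Y1 \<omega> - Y0 \<omega>) / prob (switchers 1)"
    "W_CIC M D Gs T Y (-1) = (LINT \<omega>:switchers (-1)|M. Y1 \<omega> - Y0 \<omega>) / prob (switchers (-1))"
    using PG prob_T_pos[of 1] prob_switchers_pos[of 1] prob_switchers_pos[of "-1"]
    by (simp_all add: W_CIC_def trend wald_denominator)
qed

end

theorem theorem4:
  fixes M :: "'a measure"
    and Y0 Y1 V :: "'a \<Rightarrow> real"
    and G T :: "'a \<Rightarrow> nat"
    and v :: "nat \<Rightarrow> nat \<Rightarrow> real"
    and gbar :: nat
    and U :: "nat \<Rightarrow> 'a \<Rightarrow> real"
    and h :: "nat \<Rightarrow> real \<Rightarrow> nat \<Rightarrow> real"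
  defines "D \<equiv> dobs v V G T"
    and "D0 \<equiv> treat v V G 0"
    and "D1 \<equiv> treat v V G 1"
    and "Y \<equiv> yobs (dobs v V G T) Y0 Y1"
    and "Gs \<equiv> gstar M (dobs v V G T) G T"
  assumes prob: "prob_space M"
    and meas_Y0: "Y0 \<in> borel_measurable M" and meas_Y1: "Y1 \<in> borel_measurable M"
    and meas_V: "V \<in> borel_measurable M"
    and meas_G: "G \<in> measurable M (count_space UNIV)"
    and meas_T: "T \<in> measurable M (count_space UNIV)"
    and int_Y0: "integrable M Y0" and int_Y1: "integrable M Y1"
    and G_range: "\<forall>\<omega>\<in>space M. G \<omega> \<le> gbar"
    and T_range: "\<forall>\<omega>\<in>space M. T \<omega> \<le> 1"
    and cells_pos: "\<forall>g\<le>gbar. \<forall>t\<le>1. 0 < measure M (evt M (\<lambda>\<omega>. G \<omega> = g \<and> T \<omega> = t))"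
    (* Assumption 1: V independent of T given G *)
    and A1: "\<forall>B\<in>sets borel. \<forall>g t.
        measure M (evt M (\<lambda>\<omega>. V \<omega> \<in> B \<and> T \<omega> = t \<and> G \<omega> = g)) * measure M (evt M (\<lambda>\<omega>. G \<omega> = g))
      = measure M (evt M (\<lambda>\<omega>. V \<omega> \<in> B \<and> G \<omega> = g)) * measure M (evt M (\<lambda>\<omega>. T \<omega> = t \<and> G \<omega> = g))"
    and Gs_ne: "\<exists>g\<le>gbar. EDgt M D G T g 1 = EDgt M D G T g 0"
    and GT_indep: "prob_space.indep_var M (count_space UNIV) G (count_space UNIV) T"
    and pos1: "0 < measure M (evt M (\<lambda>\<omega>. Gs \<omega> = 1))"
    and posm1: "0 < measure M (evt M (\<lambda>\<omega>. Gs \<omega> = -1))"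
  shows
    "(( \<comment> \<open>Assumption 3\<close>
        (\<forall>g\<le>gbar. \<forall>g'\<le>gbar.
           cexp M (evt M (\<lambda>\<omega>. G \<omega> = g \<and> T \<omega> = 1)) Y0 - cexp M (evt M (\<lambda>\<omega>. G \<omega> = g \<and> T \<omega> = 0)) Y0
         = cexp M (evt M (\<lambda>\<omega>. G \<omega> = g' \<and> T \<omega> = 1)) Y0 - cexp M (evt M (\<lambda>\<omega>. G \<omega> = g' \<and> T \<omega> = 0)) Y0)
      \<and> \<comment> \<open>Assumption 4\<close>
        (\<forall>g\<le>gbar.
           cexp M (evt M (\<lambda>\<omega>. G \<omega> = g \<and> T \<omega> = 1 \<and> D0 \<omega> = 1)) (\<lambda>\<omega>. Y1 \<omega> - Y0 \<omega>)
         = cexp M (evt M (\<lambda>\<omega>. G \<omega> = g \<and> T \<omega> = 0 \<and> D0 \<omega> = 1)) (\<lambda>\<omega>. Y1 \<omega> - Y0 \<omega>)))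
      \<longrightarrow> w10 M D Gs T * W_DID M D Gs T Y 1 0 + (1 - w10 M D Gs T) * W_DID M D Gs T Y (-1) 0
          = cexp M (evt M (\<lambda>\<omega>. D0 \<omega> \<noteq> D1 \<omega> \<and> T \<omega> = 1)) (\<lambda>\<omega>. Y1 \<omega> - Y0 \<omega>))
   \<and> (( \<comment> \<open>well-definedness of delta*_d\<close>
        (\<forall>d\<in>{0,1}. \<forall>t\<le>1. 0 < measure M (cell0 M D Gs T d t))
      \<and> \<comment> \<open>Assumption 3'\<close>
        (\<forall>d\<in>{0::nat,1}. \<forall>g\<le>gbar. \<forall>g'\<le>gbar.
           0 < measure M (evt M (\<lambda>\<omega>. G \<omega> = g \<and> D0 \<omega> = real d)) \<longrightarrow>
           0 < measure M (evt M (\<lambda>\<omega>. G \<omega> = g' \<and> D0 \<omega> = real d)) \<longrightarrow>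
           cexp M (evt M (\<lambda>\<omega>. G \<omega> = g \<and> T \<omega> = 1 \<and> D0 \<omega> = real d)) (if d = 0 then Y0 else Y1)
             - cexp M (evt M (\<lambda>\<omega>. G \<omega> = g \<and> T \<omega> = 0 \<and> D0 \<omega> = real d)) (if d = 0 then Y0 else Y1)
         = cexp M (evt M (\<lambda>\<omega>. G \<omega> = g' \<and> T \<omega> = 1 \<and> D0 \<omega> = real d)) (if d = 0 then Y0 else Y1)
             - cexp M (evt M (\<lambda>\<omega>. G \<omega> = g' \<and> T \<omega> = 0 \<and> D0 \<omega> = real d)) (if d = 0 then Y0 else Y1)))
      \<longrightarrow> w10 M D Gs T * W_TC M D Gs T Y 1 + (1 - w10 M D Gs T) * W_TC M D Gs T Y (-1)
          = cexp M (evt M (\<lambda>\<omega>. D0 \<omega> \<noteq> D1 \<omega> \<and> T \<omega> = 1)) (\<lambda>\<omega>. Y1 \<omega> - Y0 \<omega>))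
   \<and> (( \<comment> \<open>well-definedness of Q*_d and finiteness of E(Q*_D(Y) | G*=g, T=0)\<close>
        (\<forall>d\<in>{0,1}. \<forall>t\<le>1. 0 < measure M (cell0 M D Gs T d t))
      \<and> integrable M (\<lambda>\<omega>. indicator (evt M (\<lambda>\<omega>. T \<omega> = 0)) \<omega> * Qs M D Gs T Y (D \<omega>) (Y \<omega>))
      \<and> \<comment> \<open>Assumption 6\<close>
        (\<forall>d\<le>1. U d \<in> borel_measurable M)
      \<and> (\<forall>d\<le>1. \<forall>\<omega>\<in>space M. (if d = 0 then Y0 \<omega> else Y1 \<omega>) = h d (U d \<omega>) (T \<omega>))
      \<and> (\<forall>d\<le>1. \<forall>t\<le>1. strict_mono (\<lambda>u. h d u t))
      \<and> (\<forall>d\<le>1. \<forall>B\<in>sets borel. \<forall>g t e.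
           measure M (evt M (\<lambda>\<omega>. U d \<omega> \<in> B \<and> T \<omega> = t \<and> G \<omega> = g \<and> D0 \<omega> = e))
             * measure M (evt M (\<lambda>\<omega>. G \<omega> = g \<and> D0 \<omega> = e))
         = measure M (evt M (\<lambda>\<omega>. U d \<omega> \<in> B \<and> G \<omega> = g \<and> D0 \<omega> = e))
             * measure M (evt M (\<lambda>\<omega>. T \<omega> = t \<and> G \<omega> = g \<and> D0 \<omega> = e)))
      \<and> \<comment> \<open>Assumption 7\<close>
        closed (csupp M (space M) Y) \<and> is_interval (csupp M (space M) Y)
      \<and> (\<forall>d\<in>{0,1}. \<forall>g\<le>gbar. \<forall>t\<le>1.
           0 < measure M (evt M (\<lambda>\<omega>. D \<omega> = d \<and> G \<omega> = g \<and> T \<omega> = t)) \<longrightarrow>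
             csupp M (evt M (\<lambda>\<omega>. D \<omega> = d \<and> G \<omega> = g \<and> T \<omega> = t)) Y = csupp M (space M) Y
           \<and> continuous_on UNIV (ccdf M (evt M (\<lambda>\<omega>. D \<omega> = d \<and> G \<omega> = g \<and> T \<omega> = t)) Y)
           \<and> strict_mono_on (csupp M (space M) Y)
               (ccdf M (evt M (\<lambda>\<omega>. D \<omega> = d \<and> G \<omega> = g \<and> T \<omega> = t)) Y)))
      \<longrightarrow> w10 M D Gs T * W_CIC M D Gs T Y 1 + (1 - w10 M D Gs T) * W_CIC M D Gs T Y (-1)
          = cexp M (evt M (\<lambda>\<omega>. D0 \<omega> \<noteq> D1 \<omega> \<and> T \<omega> = 1)) (\<lambda>\<omega>. Y1 \<omega> - Y0 \<omega>))"
proof -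
  have design: "fuzzy_did M Y0 Y1 V G T v gbar"
    unfolding fuzzy_did_def fuzzy_did_axioms_def
    using prob meas_Y0 meas_Y1 meas_V meas_G meas_T int_Y0 int_Y1 G_range T_range cells_pos A1 GT_indep
      Gs_ne pos1 posm1
    unfolding D_def Gs_def by (intro conjI) auto
  show ?thesis
    unfolding D_def D0_def D1_def Y_def Gs_def
    using fuzzy_did.did_identifies_late[OF design] fuzzy_did.tc_identifies_late[OF design]
      fuzzy_did_cic.cic_identifies_late[of M Y0 Y1 V G T v gbar U h,
        unfolded fuzzy_did_cic_def fuzzy_did_cic_axioms_def] design
    by blast
qed

end
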